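(* If $$\sup_{i \in \mathbf{I}} \sum_{v \in \mathbf{V}^{i}} P(v) \lambda^i(v) =: \gamma < 1,$$ then the Backward steps in the Perfect Simulation algorithm terminate almost surely in finite time, i.e. $N^{(i,T)} = \inf\{n : \mathcal{C}_n^{(i,T)} = \emptyset\} < \infty$ almost surely.
   Context: Setting: $\mathbf{I}$ is a countable index set and $Z=(Z^i)_{i\in\mathbf{I}}$ is a time homogeneous multivariate counting process with generic intensities $\phi^i$. A neighborhood is a Borel subset of $\mathbf{I}\times(-\infty,0)$; it is finite if it is contained in $J\times[a,b]$ with $J\subset\mathbf{I}$ finite and $[a,b]$ a finite interval. For each $i$, $\mathbf{V}^i$ is a countable family of finite neighborhoods, $\lambda^i$ is a probability on $\mathbf{V}^i$, and $Z$ admits a Kalikow decomposition $\phi^i=\sum_{v\in\mathbf{V}^i}\lambda^i(v)\phi^i_v$ (on a subspace $\mathcal{Y}$ of past configurations) with $\phi^i_v$ cylindrical on $v$, where all $\phi^i$ and $\phi^i_v$ are bounded by finite deterministic constants $\Gamma^i>0$. Define the measure $P$ on Borel subsets of $\mathbf{I}\times\mathbb{R}$ by $P(J\times A)=\sum_{j\in J}\Gamma^j\,\mu(A)$ for $J\subset\mathbf{I}$ and $A$ a Borel subset of $\mathbb{R}$, where $\mu$ is Lebesgue measure. Backward procedure of the Perfect Simulation algorithm: the $N^j$, $j\in\mathbf{I}$, are independent homogeneous Poisson processes on $\mathbb{R}$ with intensity $\Gamma^j$. Starting from a point $T$ of $N^i$, pick (independently of everything else) a random neighborhood $V^i_T$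 with $\mathbb{P}(V^i_T=v)=\lambda^i(v)$; let $v^{\rightarrow T}=\{(j,u+T):(j,u)\in v\}$ and $p_j(v^{\rightarrow T})=\{t:(j,t)\in v^{\rightarrow T}\}$. The first set of ancestors is $\mathcal{C}_1^{(i,T)}=\bigcup_{j\in\mathbf{I}}\{(j,t): t\in p_j(v^{\rightarrow T}) \text{ is a jump of } N^j\}$ (Poisson points are only newly simulated on portions of $\mathbf{I}\times\mathbb{R}$ not visited before). Recursively, $\mathcal{C}_n^{(i,T)}=\bigcup_{(j,s)\in\mathcal{C}_{n-1}^{(i,T)}}\mathcal{C}_1^{(j,s)}\setminus(\mathcal{C}_1^{(i,T)}\cup\dots\cup\mathcal{C}_{n-1}^{(i,T)})$, obtained by repeating the neighborhood choice and Poisson sampling for each point of generation $n-1$. The backward steps stop at $N^{(i,T)}=\inf\{n:\mathcal{C}_n^{(i,T)}=\emptyset\}$ ($\inf\emptyset=+\infty$). *)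

theory Defs
  imports "HOL-Probability.Probability"
begin

text \<open>Neighborhoods: Borel subsets of I x (-infinity,0). Since I is countable and carries
  the discrete structure, a subset of I x R is Borel iff every section is Borel.\<close>
definition neighborhood :: "('i \<times> real) set \<Rightarrow> bool" where
  "neighborhood v \<longleftrightarrow> (\<forall>j. {t. (j, t) \<in> v} \<in> sets borel) \<and> v \<subseteq> UNIV \<times> {..<0}"

definition finite_neighborhood :: "('i \<times> real) set \<Rightarrow> bool" where
  "finite_neighborhood v \<longleftrightarrow> neighborhood v \<and>
     (\<exists>J a b. finite J \<and> v \<subseteq> J \<times> {a..b})"

text \<open>The measure P on I x R: P(S) = sum over j of Gamma^j times the Lebesgue measure of
  the j-section of S (so that P(J x A) = sum_{j in J} Gamma^j mu(A)).\<close>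
definition Pmeas :: "('i \<Rightarrow> real) \<Rightarrow> ('i \<times> real) set \<Rightarrow> ennreal" where
  "Pmeas \<Gamma> S = (\<Sum>\<^sub>\<infinity> j. ennreal (\<Gamma> j) * emeasure lborel {t. (j, t) \<in> S})"

text \<open>Index of a point t of a locally finite point configuration N \<subseteq> R:
  the points in (0,inf) get indices 1,2,3,... in increasing order, the points in (-inf,0]
  get indices 0,-1,-2,... in decreasing order. Used to attach to every point its own,
  independently chosen neighborhood.\<close>
definition point_index :: "real set \<Rightarrow> real \<Rightarrow> int" where
  "point_index N t = (if 0 < t then int (card (N \<inter> {0<..t})) else 1 - int (card (N \<inter> {t..0})))"

text \<open>Probabilistic setting of the backward procedure:
  N j are independent homogeneous Poisson processes on R with intensity Gamma j
  (given by their random, locally finite, sets of jump times), and Mk j k are the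
  neighborhood choices attached to the k-th point of N j: i.i.d. with law lam j,
  independent of everything else.\<close>
definition poisson_with_choices ::
  "'w measure \<Rightarrow> ('i \<Rightarrow> real) \<Rightarrow> ('i \<Rightarrow> ('i \<times> real) set pmf)
     \<Rightarrow> ('i \<Rightarrow> 'w \<Rightarrow> real set) \<Rightarrow> ('i \<Rightarrow> int \<Rightarrow> 'w \<Rightarrow> ('i \<times> real) set) \<Rightarrow> bool" where
  "poisson_with_choices M \<Gamma> lam N Mk \<longleftrightarrow>
     prob_space M \<and>
     (\<forall>j \<omega> A. bounded A \<longrightarrow> finite (N j \<omega> \<inter> A)) \<and>
     (\<forall>j A. A \<in> sets borel \<and> bounded A \<longrightarrow>
        (\<lambda>\<omega>. card (N j \<omega> \<inter> A)) \<in> M \<rightarrow>\<^sub>M count_space UNIV \<and>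
        (\<forall>k. measure M {\<omega> \<in> space M. card (N j \<omega> \<inter> A) = k}
              = (\<Gamma> j * measure lborel A) ^ k / fact k * exp (- (\<Gamma> j * measure lborel A)))) \<and>
     (\<forall>j k. Mk j k \<in> M \<rightarrow>\<^sub>M count_space UNIV \<and>
        (\<forall>v. measure M {\<omega> \<in> space M. Mk j k \<omega> = v} = pmf (lam j) v)) \<and>
     (\<forall>\<A>. \<A> \<subseteq> {(j, A). A \<in> sets borel \<and> bounded A} \<and>
          (\<forall>j A B. (j, A) \<in> \<A> \<and> (j, B) \<in> \<A> \<and> A \<noteq> B \<longrightarrow> A \<inter> B = {}) \<longrightarrow>
        prob_space.indep_vars M (\<lambda>_. count_space UNIV)
          (\<lambda>x \<omega>. case x of Inl (j, A) \<Rightarrow> Inl (card (N j \<omega> \<inter> A))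
                         | Inr (j, k) \<Rightarrow> Inr (Mk j k \<omega>))
          (Inl ` \<A> \<union> range Inr))"

definition first_ancestors ::
  "('i \<Rightarrow> 'w \<Rightarrow> real set) \<Rightarrow> ('i \<Rightarrow> int \<Rightarrow> 'w \<Rightarrow> ('i \<times> real) set) \<Rightarrow> 'w
     \<Rightarrow> 'i \<times> real \<Rightarrow> ('i \<times> real) set" where
  "first_ancestors N Mk \<omega> x =
     (case x of (j, s) \<Rightarrow>
        {(j', t). t \<in> N j' \<omega> \<and> (j', t - s) \<in> Mk j (point_index (N j \<omega>) s) \<omega>})"

text \<open>gen_pair C1 x n = (C_n, C_1 \<union> ... \<union> C_n), with C_0 = {x}.\<close>
primrec gen_pair :: "('a \<Rightarrow> 'a set) \<Rightarrow> 'a \<Rightarrow> nat \<Rightarrow> 'a set \<times> 'a set" where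
  "gen_pair C1 x 0 = ({x}, {})"
| "gen_pair C1 x (Suc n) =
     (let (c, vis) = gen_pair C1 x n; new = (\<Union>y\<in>c. C1 y) - vis in (new, vis \<union> new))"

definition ancestor_gen :: "('a \<Rightarrow> 'a set) \<Rightarrow> 'a \<Rightarrow> nat \<Rightarrow> 'a set" where
  "ancestor_gen C1 x n = fst (gen_pair C1 x n)"

definition backward_steps :: "('a \<Rightarrow> 'a set) \<Rightarrow> 'a \<Rightarrow> enat" where
  "backward_steps C1 x =
     (if \<exists>n. ancestor_gen C1 x n = {} then enat (LEAST n. ancestor_gen C1 x n = {}) else \<infinity>)"

end

theory Submission
  imports Defs
begin

(* Cut time into cells of width \<delta>. Weight each chain of ancestor cells by the number of
   Poisson points whose neighborhood choices realise it, and require every step to lie, with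
   margin 2\<delta>, inside an open envelope of the chosen neighborhood whose total P-mass exceeds
   that of the neighborhood by little enough that the envelope version q of \<gamma> is still < 1.
   Along a chain the cells are strictly decreasing in time, so the counts and the choices met are
   independent, and each step contributes a factor at most q: the expected weight of the chains
   of length n starting in [-K, K] is at most \<Gamma>^i (2K + 2) q^n. Since the envelopes are open,
   an infinite backward procedure from (i, T) yields, for every n, a chain that is seen for all
   small \<delta>; by Fatou this has probability at most \<Gamma>^i (2K + 2) q^n for every n, hence 0. *)

lemma borel_measurable_nn_integral_count_space:
  fixes f :: "'i \<Rightarrow> 'a \<Rightarrow> ennreal"
  assumes I: "countable I" and f: "\<And>i. i \<in> I \<Longrightarrow> f i \<in> borel_measurable M"
  shows "(\<lambda>x. \<integral>\<^sup>+i. f i x \<partial>count_space I) \<in> borel_measurable M"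
proof cases
  assume "finite I"
  then show ?thesis
    using f by (simp add: nn_integral_count_space_finite)
next
  assume inf: "infinite I"
  note enum = bij_betw_from_nat_into[OF I inf]
  have eq: "(\<integral>\<^sup>+i. f i x \<partial>count_space I) = (\<Sum>n. f (from_nat_into I n) x)" for x
    by (simp add: nn_integral_bij_count_space[symmetric, OF enum] nn_integral_count_space_nat)
  have "I \<noteq> {}"
    using inf by auto
  have "f (from_nat_into I n) \<in> borel_measurable M" for n
    using f from_nat_into[OF \<open>I \<noteq> {}\<close>] by blast
  then have "(\<lambda>x. \<Sum>n. f (from_nat_into I n) x) \<in> borel_measurable M"
    by measurable
  then show ?thesis
    unfolding eq .
qed

lemma le_nn_integral_count_space: "x \<in> A \<Longrightarrow> f x \<le> (\<integral>\<^sup>+y. f y \<partial>count_space A)"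
proof -
  assume x: "x \<in> A"
  have "(\<integral>\<^sup>+y. f y * indicator {x} y \<partial>count_space A) = (\<Sum>y\<in>{x}. f y * indicator {x} y)"
    by (rule nn_integral_count_space') (use x in auto)
  then have "f x = (\<integral>\<^sup>+y. f y * indicator {x} y \<partial>count_space A)"
    by simp
  also have "\<dots> \<le> (\<integral>\<^sup>+y. f y \<partial>count_space A)"
    by (intro nn_integral_mono) (auto split: split_indicator)
  finally show ?thesis .
qed

lemma nn_integral_count_space_le_infsum:
  fixes f :: "'a \<Rightarrow> ennreal"
  assumes S: "countable S" and SA: "S \<subseteq> A"
  shows "(\<integral>\<^sup>+x. f x \<partial>count_space S) \<le> infsum f A"
proof -
  have sum_le: "sum f F \<le> infsum f A" if "finite F" "F \<subseteq> A" for F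
    unfolding nonneg_infsum_complete[of A f, simplified] by (rule SUP_upper) (use that in auto)
  show ?thesis
  proof (cases "finite S")
    case True
    then show ?thesis
      using sum_le SA by (simp add: nn_integral_count_space_finite)
  next
    case False
    note enum = bij_betw_from_nat_into[OF S False]
    have inj: "inj_on (from_nat_into S) {..<n}" for n
      using enum unfolding bij_betw_def by (auto intro: inj_on_subset)
    have "(\<integral>\<^sup>+x. f x \<partial>count_space S) = (SUP n. \<Sum>i<n. f (from_nat_into S i))"
      by (simp add: nn_integral_bij_count_space[symmetric, OF enum] nn_integral_count_space_nat
          suminf_eq_SUP)
    also have "\<dots> \<le> infsum f A"
    proof (rule SUP_least)
      fix n
      have "from_nat_into S ` {..<n} \<subseteq> A"
        using enum SA unfolding bij_betw_def by auto
      then show "(\<Sum>i<n. f (from_nat_into S i)) \<le> infsum f A"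
        using sum_le[of "from_nat_into S ` {..<n}"] by (simp add: sum.reindex[OF inj])
    qed
    finally show ?thesis .
  qed
qed

lemma nn_integral_geometric_to_nat_le:
  fixes \<epsilon> :: real
  assumes "0 \<le> \<epsilon>"
  shows "(\<integral>\<^sup>+j. ennreal (\<epsilon> / 2 ^ Suc (to_nat (j::'i::countable))) \<partial>count_space UNIV) \<le> ennreal \<epsilon>"
proof -
  have bij: "bij_betw to_nat (UNIV::'i set) (range (to_nat :: 'i \<Rightarrow> nat))"
    by (simp add: bij_betw_def)
  have "(\<integral>\<^sup>+j. ennreal (\<epsilon> / 2 ^ Suc (to_nat (j::'i))) \<partial>count_space UNIV) =
        (\<integral>\<^sup>+n. ennreal (\<epsilon> / 2 ^ Suc n) \<partial>count_space (range (to_nat :: 'i \<Rightarrow> nat)))"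
    by (rule nn_integral_bij_count_space[OF bij])
  also have "\<dots> = (\<integral>\<^sup>+n. ennreal (\<epsilon> / 2 ^ Suc n) * indicator (range (to_nat :: 'i \<Rightarrow> nat)) n
      \<partial>count_space UNIV)"
    by (simp add: nn_integral_count_space_indicator)
  also have "\<dots> \<le> (\<Sum>n. ennreal (\<epsilon> / 2 ^ Suc n))"
    unfolding nn_integral_count_space_nat[symmetric]
    by (rule nn_integral_mono) (simp split: split_indicator)
  also have "(\<lambda>n. \<epsilon> / 2 ^ Suc n) sums \<epsilon>"
    using sums_mult[OF power_half_series, of \<epsilon>] by (simp add: power_divide)
  then have "(\<Sum>n. ennreal (\<epsilon> / 2 ^ Suc n)) = ennreal \<epsilon>"
    using assms by (simp add: suminf_ennreal2 sums_summable sums_unique[symmetric])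
  finally show ?thesis .
qed

lemma measurable_comp_restrict_count_space:
  fixes h :: "'a \<Rightarrow> 'w \<Rightarrow> 'c::countable"
  assumes F: "finite F" and h: "\<And>a. a \<in> F \<Longrightarrow> h a \<in> M \<rightarrow>\<^sub>M count_space UNIV"
    and G: "\<And>y. G y \<in> space N"
  shows "(\<lambda>\<omega>. G (restrict (\<lambda>a. h a \<omega>) F)) \<in> M \<rightarrow>\<^sub>M N"
proof -
  have "(\<lambda>\<omega>. restrict (\<lambda>a. h a \<omega>) F) \<in> M \<rightarrow>\<^sub>M PiM F (\<lambda>_. count_space UNIV)"
    using h by (rule measurable_restrict)
  moreover have "PiM F (\<lambda>_. count_space (UNIV::'c set)) = count_space (PiE F (\<lambda>_. UNIV))"
    using F by (rule count_space_PiM_finite) auto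
  ultimately have "(\<lambda>\<omega>. restrict (\<lambda>a. h a \<omega>) F) \<in> M \<rightarrow>\<^sub>M count_space (PiE F (\<lambda>_. UNIV))"
    by simp
  moreover have "G \<in> count_space (PiE F (\<lambda>_. UNIV)) \<rightarrow>\<^sub>M N"
    using G by auto
  ultimately show ?thesis
    by (rule measurable_compose)
qed

lemma measurable_PiM_count_space_component:
  assumes "a \<in> A" "\<And>x. g x \<in> space N"
  shows "(\<lambda>y. g (y a)) \<in> PiM A (\<lambda>_. count_space UNIV) \<rightarrow>\<^sub>M N"
proof -
  have "(\<lambda>y. y a) \<in> PiM A (\<lambda>_. count_space UNIV) \<rightarrow>\<^sub>M count_space UNIV"
    using assms(1) by (rule measurable_component_singleton)
  moreover have "g \<in> count_space UNIV \<rightarrow>\<^sub>M N"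
    using assms(2) by auto
  ultimately show ?thesis
    by (rule measurable_compose)
qed

lemma prod_nn_integral_count_space:
  fixes f :: "'k \<Rightarrow> 'c::countable \<Rightarrow> ennreal"
  assumes I: "finite I"
  shows "(\<Prod>k\<in>I. \<integral>\<^sup>+\<iota>. f k \<iota> \<partial>count_space UNIV) =
         (\<integral>\<^sup>+h. (\<Prod>k\<in>I. f k (h k)) \<partial>count_space (PiE I (\<lambda>_. UNIV)))"
proof -
  interpret product_sigma_finite "\<lambda>_::'k. count_space (UNIV::'c set)"
    by (intro product_sigma_finite.intro sigma_finite_measure_count_space_countable) auto
  have "(\<integral>\<^sup>+h. (\<Prod>k\<in>I. f k (h k)) \<partial>PiM I (\<lambda>_. count_space UNIV)) =
        (\<Prod>k\<in>I. \<integral>\<^sup>+\<iota>. f k \<iota> \<partial>count_space UNIV)"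
    by (rule product_nn_integral_prod) (use I in auto)
  moreover have "PiM I (\<lambda>_. count_space (UNIV::'c set)) = count_space (PiE I (\<lambda>_. UNIV))"
    using I by (rule count_space_PiM_finite) auto
  ultimately show ?thesis
    by simp
qed

lemma prod_list_map_conv_prod_nth: "prod_list (map f xs) = (\<Prod>k<length xs. f (xs ! k))"
proof (induction xs)
  case (Cons x xs)
  then show ?case
    by (simp add: prod.lessThan_Suc_shift del: prod.lessThan_Suc)
qed simp

lemma one_le_prod_list:
  fixes xs :: "'a::linordered_nonzero_semiring list"
  shows "(\<And>x. x \<in> set xs \<Longrightarrow> 1 \<le> x) \<Longrightarrow> 1 \<le> prod_list xs"
proof (induction xs)
  case (Cons x xs)
  then have "1 \<le> x" "1 \<le> prod_list xs"
    by auto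
  then have "1 * 1 \<le> x * prod_list xs"
    by (intro mult_mono) (auto intro: order_trans[OF zero_le_one])
  then show ?case
    by simp
qed simp

lemma (in prob_space) indep_var_nn_integral_mult:
  fixes X Y :: "'a \<Rightarrow> ennreal"
  assumes "indep_var borel X borel Y"
  shows "(\<integral>\<^sup>+\<omega>. X \<omega> * Y \<omega> \<partial>M) = (\<integral>\<^sup>+\<omega>. X \<omega> \<partial>M) * (\<integral>\<^sup>+\<omega>. Y \<omega> \<partial>M)"
proof -
  have borel: "case_bool borel borel = (\<lambda>_::bool. borel)"
    by (auto simp: fun_eq_iff split: bool.split)
  have "indep_vars (\<lambda>_. borel) (case_bool X Y) UNIV"
    using assms unfolding indep_var_def borel .
  then have "(\<integral>\<^sup>+\<omega>. (\<Prod>b\<in>UNIV. case_bool X Y b \<omega>) \<partial>M) = (\<Prod>b\<in>UNIV. \<integral>\<^sup>+\<omega>. case_bool X Y b \<omega> \<partial>M)"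
    by (intro indep_vars_nn_integral) auto
  then show ?thesis
    by (simp add: UNIV_bool mult.commute)
qed

lemma poisson_mean_sums: "(\<lambda>k. real k * r ^ k / fact k) sums (r * exp r)"
proof -
  have "(\<lambda>n. r ^ n / fact n) sums exp r"
    using exp_converges[of r] by (simp add: divide_inverse scaleR_conv_of_real mult.commute)
  then have "(\<lambda>n. r * (r ^ n / fact n)) sums (r * exp r)"
    by (rule sums_mult)
  moreover have "r * (r ^ n / fact n) = real (Suc n) * r ^ Suc n / fact (Suc n)" for n
    by (simp add: field_simps del: of_nat_Suc)
  ultimately have "(\<lambda>n. real (Suc n) * r ^ Suc n / fact (Suc n)) sums (r * exp r)"
    by simp
  from sums_Suc[OF this] show ?thesis
    by simp
qed

lemma emeasure_lborel_translate:
  fixes U :: "real set"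
  assumes "U \<in> sets borel"
  shows "emeasure lborel {x. x - a \<in> U} = emeasure lborel U"
proof -
  have "emeasure (distr lborel borel ((+) (-a))) U = emeasure lborel ((+) (-a) -` U \<inter> space lborel)"
    using assms by (intro emeasure_distr) auto
  moreover have "(+) (-a) -` U \<inter> space lborel = {x. x - a \<in> U}"
    by auto
  ultimately show ?thesis
    by (simp add: lborel_distr_plus)
qed

lemma open_envelope_exists:
  fixes S :: "real set"
  assumes S: "S \<in> sets borel" "S \<subseteq> {..<0}" and e: "0 < e"
  obtains T where "open T" "S \<subseteq> T" "T \<subseteq> {..<0}"
    "emeasure lborel T \<le> emeasure lborel S + ennreal e"
proof -
  have "S \<in> sets lebesgue"
    using S by simp
  then obtain T0 where T0: "open T0" "S \<subseteq> T0" "emeasure lebesgue (T0 - S) < ennreal e"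
    using sets_lebesgue_outer_open e by metis
  define T where "T = T0 \<inter> {..<0}"
  have Tb: "T \<in> sets borel"
    using T0(1) by (simp add: T_def)
  have "emeasure lborel T \<le> emeasure lborel (S \<union> (T - S))"
    by (rule emeasure_mono) (use Tb S in auto)
  also have "\<dots> \<le> emeasure lborel S + emeasure lborel (T - S)"
    by (rule emeasure_subadditive) (use Tb S in auto)
  also have "emeasure lborel (T - S) = emeasure lebesgue (T - S)"
    using Tb S by simp
  also have "\<dots> \<le> emeasure lebesgue (T0 - S)"
    by (rule emeasure_mono) (use T0(1) S in \<open>auto simp: T_def\<close>)
  finally have "emeasure lborel T \<le> emeasure lborel S + ennreal e"
    using T0(3) by (meson add_left_mono less_imp_le order_trans)
  then show ?thesis
    using T0 S by (intro that[of T]) (auto simp: T_def)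
qed

lemma ancestor_gen_path:
  "y \<in> ancestor_gen C1 x n \<Longrightarrow> \<exists>p. p 0 = x \<and> p n = y \<and> (\<forall>k<n. p (Suc k) \<in> C1 (p k))"
proof (induction n arbitrary: y)
  case 0
  then show ?case
    by (auto simp: ancestor_gen_def)
next
  case (Suc n)
  have "fst (gen_pair C1 x (Suc n)) \<subseteq> (\<Union>z\<in>fst (gen_pair C1 x n). C1 z)"
    by (cases "gen_pair C1 x n") (auto simp: Let_def)
  then obtain z where z: "z \<in> ancestor_gen C1 x n" "y \<in> C1 z"
    using Suc.prems by (auto simp: ancestor_gen_def)
  obtain p where p: "p 0 = x" "p n = z" "\<forall>k<n. p (Suc k) \<in> C1 (p k)"
    using Suc.IH[OF z(1)] by blast
  have "\<forall>k<Suc n. (p(Suc n := y)) (Suc k) \<in> C1 ((p(Suc n := y)) k)"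
    using p z by (auto simp: less_Suc_eq)
  then show ?case
    using p by (intro exI[of _ "p(Suc n := y)"]) auto
qed

lemma path_if_backward_steps_infinite:
  assumes "\<not> backward_steps C1 x < \<infinity>"
  obtains p where "p 0 = x" "\<forall>k<n. p (Suc k) \<in> C1 (p k)"
proof -
  have "ancestor_gen C1 x n \<noteq> {}"
    using assms unfolding backward_steps_def by (auto split: if_splits)
  then obtain y where "y \<in> ancestor_gen C1 x n"
    by blast
  from ancestor_gen_path[OF this] show ?thesis
    using that by blast
qed

section \<open>Grid cells and point indices\<close>

definition grid_cell :: "real \<Rightarrow> int \<Rightarrow> real set" where
  "grid_cell \<delta> l = {of_int l * \<delta> <.. (of_int l + 1) * \<delta>}"

lemma bounded_grid_cell: "bounded (grid_cell \<delta> l)"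
  unfolding grid_cell_def
  by (rule bounded_subset[OF compact_imp_bounded[OF compact_Icc[of "of_int l * \<delta>"]]]) auto

lemma borel_grid_cell: "grid_cell \<delta> l \<in> sets borel"
  unfolding grid_cell_def by simp

lemma emeasure_grid_cell: "0 < \<delta> \<Longrightarrow> emeasure lborel (grid_cell \<delta> l) = ennreal \<delta>"
  unfolding grid_cell_def by (simp add: algebra_simps)

lemma mem_grid_cell_ceiling:
  assumes "0 < \<delta>"
  shows "s \<in> grid_cell \<delta> (\<lceil>s / \<delta>\<rceil> - 1)"
proof -
  have "s / \<delta> \<le> of_int \<lceil>s / \<delta>\<rceil>" and less: "of_int \<lceil>s / \<delta>\<rceil> < s / \<delta> + 1"
    by linarith+
  from mult_right_mono[OF this(1), of \<delta>] have "s \<le> of_int \<lceil>s / \<delta>\<rceil> * \<delta>"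
    using assms by simp
  moreover from mult_strict_right_mono[OF less assms] have "(of_int \<lceil>s / \<delta>\<rceil> - 1) * \<delta> < s"
    using assms by (simp add: algebra_simps)
  ultimately show ?thesis
    unfolding grid_cell_def by auto
qed

lemma disjoint_grid_cells:
  assumes "0 < \<delta>" "l \<noteq> l'"
  shows "grid_cell \<delta> l \<inter> grid_cell \<delta> l' = {}"
proof -
  have False if "x \<in> grid_cell \<delta> l" "x \<in> grid_cell \<delta> l'" for x
  proof -
    have "of_int l * \<delta> < (of_int l' + 1) * \<delta>" "of_int l' * \<delta> < (of_int l + 1) * \<delta>"
      using that unfolding grid_cell_def by auto
    then have "of_int l < (of_int l' + 1::real)" "of_int l' < (of_int l + 1::real)"
      using assms by (simp_all add: mult_less_cancel_right)
    then show False
      using assms by linarith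
  qed
  then show ?thesis
    by auto
qed

lemma grid_cell_inj:
  assumes "0 < \<delta>" "grid_cell \<delta> l = grid_cell \<delta> l'"
  shows "l = l'"
proof (rule ccontr)
  assume "l \<noteq> l'"
  moreover have "(of_int l + 1) * \<delta> \<in> grid_cell \<delta> l"
    using assms(1) unfolding grid_cell_def by (auto simp: algebra_simps)
  ultimately show False
    using assms disjoint_grid_cells by blast
qed

lemma nn_integral_grid_cells_le:
  assumes \<delta>: "0 < \<delta>" and S: "S \<in> sets borel" and L: "\<And>l. l \<in> L \<Longrightarrow> grid_cell \<delta> l \<subseteq> S"
  shows "(\<integral>\<^sup>+l. ennreal \<delta> \<partial>count_space L) \<le> emeasure lborel S"
proof -
  have "(\<integral>\<^sup>+l. ennreal \<delta> \<partial>count_space L) = (\<integral>\<^sup>+l. emeasure lborel (grid_cell \<delta> l) \<partial>count_space L)"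
    using \<delta> by (simp add: emeasure_grid_cell)
  also have "\<dots> = emeasure lborel (\<Union>l\<in>L. grid_cell \<delta> l)"
    by (rule emeasure_UN_countable[symmetric])
      (auto simp: disjoint_family_on_def disjoint_grid_cells[OF \<delta>] borel_grid_cell)
  also have "\<dots> \<le> emeasure lborel S"
    by (rule emeasure_mono) (use L S in auto)
  finally show ?thesis .
qed

(* The indices that point_index assigns to the points in cell l when each cell l' contains
   cv l' points. *)
definition index_block :: "(int \<Rightarrow> nat) \<Rightarrow> int \<Rightarrow> int set" where
  "index_block cv l =
    (if 0 \<le> l then {int (\<Sum>l'\<in>{0..<l}. cv l') + 1 .. int (\<Sum>l'\<in>{0..<l}. cv l') + int (cv l)}
     else {1 - int (\<Sum>l'\<in>{l..<0}. cv l') .. - int (\<Sum>l'\<in>{l+1..<0}. cv l')})"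

lemma index_block_cong:
  "(\<And>l'. l' \<in> {min l 0..max l 0} \<Longrightarrow> cv l' = cv' l') \<Longrightarrow> index_block cv l = index_block cv' l"
  unfolding index_block_def by (auto intro!: sum.cong)

lemma finite_index_block: "finite (index_block cv l)"
  by (simp add: index_block_def)

lemma card_index_block: "card (index_block cv l) = cv l"
proof (cases "0 \<le> l")
  case False
  then have "{l..<0} = insert l {l+1..<0}"
    by auto
  then show ?thesis
    using False by (simp add: index_block_def)
qed (simp add: index_block_def)

lemma disjoint_index_blocks_less:
  assumes "l < l'"
  shows "index_block cv l \<inter> index_block cv l' = {}"
proof (cases "0 \<le> l")
  case True
  have "(\<Sum>l'\<in>{0..<l+1}. cv l') \<le> (\<Sum>l'\<in>{0..<l'}. cv l')"
    by (rule sum_mono2) (use assms in auto)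
  moreover have "{0..<l+1} = insert l {0..<l}"
    using True by auto
  ultimately have "(\<Sum>l'\<in>{0..<l}. cv l') + cv l \<le> (\<Sum>l'\<in>{0..<l'}. cv l')"
    by simp
  then have "int (\<Sum>l'\<in>{0..<l}. cv l') + int (cv l) \<le> int (\<Sum>l'\<in>{0..<l'}. cv l')"
    by linarith
  then show ?thesis
    using True assms unfolding index_block_def by (auto simp del: of_nat_sum)
next
  case False
  show ?thesis
  proof (cases "0 \<le> l'")
    case False': False
    have "(\<Sum>l'\<in>{l'..<0}. cv l') \<le> (\<Sum>l'\<in>{l+1..<0}. cv l')"
      by (rule sum_mono2) (use assms in auto)
    then have "int (\<Sum>l'\<in>{l'..<0}. cv l') \<le> int (\<Sum>l'\<in>{l+1..<0}. cv l')"
      by linarith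
    then show ?thesis
      using False False' unfolding index_block_def by (auto simp del: of_nat_sum)
  qed (use False in \<open>auto simp: index_block_def simp del: of_nat_sum\<close>)
qed

lemma disjoint_index_blocks: "l \<noteq> l' \<Longrightarrow> index_block cv l \<inter> index_block cv l' = {}"
  using disjoint_index_blocks_less[of l l' cv] disjoint_index_blocks_less[of l' l cv]
  by (cases "l < l'") auto

section \<open>Poisson counts and neighborhood choices\<close>

locale poisson_choices = prob_space M for M :: "'w measure" +
  fixes \<Gamma> :: "'i::countable \<Rightarrow> real"
    and lam :: "'i \<Rightarrow> ('i \<times> real) set pmf"
    and N :: "'i \<Rightarrow> 'w \<Rightarrow> real set"
    and Mk :: "'i \<Rightarrow> int \<Rightarrow> 'w \<Rightarrow> ('i \<times> real) set"
  assumes Gamma_pos: "\<And>j. 0 < \<Gamma> j"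
    and setting: "poisson_with_choices M \<Gamma> lam N Mk"
begin

lemma locally_finite_all:
  "\<forall>j \<omega> A. bounded A \<longrightarrow> finite (N j \<omega> \<inter> A)"
  using setting unfolding poisson_with_choices_def by (elim conjE) assumption

lemma card_points_law:
  "\<forall>j A. A \<in> sets borel \<and> bounded A \<longrightarrow>
     (\<lambda>\<omega>. card (N j \<omega> \<inter> A)) \<in> M \<rightarrow>\<^sub>M count_space UNIV \<and>
     (\<forall>k. measure M {\<omega> \<in> space M. card (N j \<omega> \<inter> A) = k}
           = (\<Gamma> j * measure lborel A) ^ k / fact k * exp (- (\<Gamma> j * measure lborel A)))"
  using setting unfolding poisson_with_choices_def by (elim conjE) assumption

lemma choice_law:
  "\<forall>j k. Mk j k \<in> M \<rightarrow>\<^sub>M count_space UNIV \<and>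
     (\<forall>v. measure M {\<omega> \<in> space M. Mk j k \<omega> = v} = pmf (lam j) v)"
  using setting unfolding poisson_with_choices_def by (elim conjE) assumption

lemma indep_counts_choices:
  "\<forall>\<A>. \<A> \<subseteq> {(j, A). A \<in> sets borel \<and> bounded A} \<and>
       (\<forall>j A B. (j, A) \<in> \<A> \<and> (j, B) \<in> \<A> \<and> A \<noteq> B \<longrightarrow> A \<inter> B = {}) \<longrightarrow>
     indep_vars (\<lambda>_. count_space UNIV)
       (\<lambda>x \<omega>. case x of Inl (j, A) \<Rightarrow> Inl (card (N j \<omega> \<inter> A)) | Inr (j, k) \<Rightarrow> Inr (Mk j k \<omega>))
       (Inl ` \<A> \<union> range Inr)"
  using setting unfolding poisson_with_choices_def by (elim conjE) assumption

lemma locally_finite: "bounded A \<Longrightarrow> finite (N j \<omega> \<inter> A)"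
  using locally_finite_all by blast

lemma measurable_card_points:
  "A \<in> sets borel \<Longrightarrow> bounded A \<Longrightarrow> (\<lambda>\<omega>. card (N j \<omega> \<inter> A)) \<in> M \<rightarrow>\<^sub>M count_space UNIV"
  using card_points_law by blast

lemma prob_card_points:
  "A \<in> sets borel \<Longrightarrow> bounded A \<Longrightarrow>
   measure M {\<omega> \<in> space M. card (N j \<omega> \<inter> A) = k}
     = (\<Gamma> j * measure lborel A) ^ k / fact k * exp (- (\<Gamma> j * measure lborel A))"
  using card_points_law by blast

lemma measurable_choice: "Mk j k \<in> M \<rightarrow>\<^sub>M count_space UNIV"
  using choice_law by blast

lemma prob_choice: "measure M {\<omega> \<in> space M. Mk j k \<omega> = v} = pmf (lam j) v"
  using choice_law by blast

lemma sets_choice: "{\<omega> \<in> space M. Mk j k \<omega> \<in> Q} \<in> sets M"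
  using measurable_sets[OF measurable_choice, of Q j k] by (simp add: vimage_def Int_def conj_commute)

definition count_or_choice :: "('i \<times> real set) + ('i \<times> int) \<Rightarrow> 'w \<Rightarrow> nat + ('i \<times> real) set" where
  "count_or_choice x \<omega> = (case x of Inl (j, A) \<Rightarrow> Inl (card (N j \<omega> \<inter> A)) | Inr (j, k) \<Rightarrow> Inr (Mk j k \<omega>))"

lemma indep_count_or_choice:
  assumes "\<A> \<subseteq> {(j, A). A \<in> sets borel \<and> bounded A}"
    and "\<And>j A B. (j, A) \<in> \<A> \<Longrightarrow> (j, B) \<in> \<A> \<Longrightarrow> A \<noteq> B \<Longrightarrow> A \<inter> B = {}"
  shows "indep_vars (\<lambda>_. count_space UNIV) count_or_choice (Inl ` \<A> \<union> range Inr)"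
proof -
  have "\<forall>j A B. (j, A) \<in> \<A> \<and> (j, B) \<in> \<A> \<and> A \<noteq> B \<longrightarrow> A \<inter> B = {}"
    using assms(2) by blast
  from indep_counts_choices[rule_format, OF conjI[OF assms(1) this]] show ?thesis
    unfolding count_or_choice_def[abs_def] .
qed

lemma AE_choice_in_support: "AE \<omega> in M. \<forall>j k. Mk j k \<omega> \<in> set_pmf (lam j)"
proof -
  have "AE \<omega> in M. Mk j k \<omega> \<in> set_pmf (lam j)" for j k
  proof -
    have "{\<omega> \<in> space M. Mk j k \<omega> \<in> set_pmf (lam j)} = (\<Union>v\<in>set_pmf (lam j). {\<omega> \<in> space M. Mk j k \<omega> = v})"
      by auto
    then have "emeasure M {\<omega> \<in> space M. Mk j k \<omega> \<in> set_pmf (lam j)}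
        = (\<integral>\<^sup>+v. emeasure M {\<omega> \<in> space M. Mk j k \<omega> = v} \<partial>count_space (set_pmf (lam j)))"
      by (simp only:) (rule emeasure_UN_countable, auto simp: sets_choice[of _ _ "{_}", simplified]
          disjoint_family_on_def)
    also have "\<dots> = (\<integral>\<^sup>+v. ennreal (pmf (lam j) v) \<partial>count_space (set_pmf (lam j)))"
      by (simp add: emeasure_eq_measure prob_choice)
    also have "\<dots> = 1"
      by (simp add: nn_integral_pmf emeasure_pmf)
    finally have "prob {\<omega> \<in> space M. Mk j k \<omega> \<in> set_pmf (lam j)} = 1"
      by (simp add: emeasure_eq_measure)
    then have "AE \<omega> in M. \<omega> \<in> {\<omega> \<in> space M. Mk j k \<omega> \<in> set_pmf (lam j)}"
      using sets_choice by (subst AE_in_set_eq_1)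
    then show ?thesis
      by auto
  qed
  then show ?thesis
    by (simp add: AE_all_countable)
qed

definition cell_count :: "real \<Rightarrow> 'i \<Rightarrow> int \<Rightarrow> 'w \<Rightarrow> nat" where
  "cell_count \<delta> j l \<omega> = card (N j \<omega> \<inter> grid_cell \<delta> l)"

definition cell_indices :: "real \<Rightarrow> 'i \<Rightarrow> int \<Rightarrow> 'w \<Rightarrow> int set" where
  "cell_indices \<delta> j l \<omega> = index_block (\<lambda>l'. cell_count \<delta> j l' \<omega>) l"

definition choice_count :: "real \<Rightarrow> 'i \<Rightarrow> int \<Rightarrow> ('i \<times> real) set set \<Rightarrow> 'w \<Rightarrow> ennreal" where
  "choice_count \<delta> j l P \<omega> =
     (\<integral>\<^sup>+\<iota>. of_bool (\<iota> \<in> cell_indices \<delta> j l \<omega> \<and> Mk j \<iota> \<omega> \<in> P) \<partial>count_space UNIV)"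

lemma measurable_cell_count: "cell_count \<delta> j l \<in> M \<rightarrow>\<^sub>M count_space UNIV"
  unfolding cell_count_def[abs_def] by (rule measurable_card_points[OF borel_grid_cell bounded_grid_cell])

lemma measurable_mem_cell_indices: "(\<lambda>\<omega>. \<iota> \<in> cell_indices \<delta> j l \<omega>) \<in> M \<rightarrow>\<^sub>M count_space UNIV"
proof -
  have "cell_indices \<delta> j l \<omega> = index_block (restrict (\<lambda>l'. cell_count \<delta> j l' \<omega>) {min l 0..max l 0}) l"
    for \<omega>
    unfolding cell_indices_def by (rule index_block_cong) simp
  then show ?thesis
    by (simp only:) (rule measurable_comp_restrict_count_space, auto intro: measurable_cell_count)
qed

lemma borel_measurable_marked_indicator:
  "(\<lambda>\<omega>. of_bool (\<iota> \<in> cell_indices \<delta> j l \<omega> \<and> Mk j \<iota> \<omega> \<in> P) :: ennreal) \<in> borel_measurable M"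
proof -
  have "{\<omega> \<in> space M. \<iota> \<in> cell_indices \<delta> j l \<omega>} \<in> sets M"
    using measurable_mem_cell_indices[of \<iota> \<delta> j l] by (simp add: pred_def)
  then have "{\<omega> \<in> space M. \<iota> \<in> cell_indices \<delta> j l \<omega> \<and> Mk j \<iota> \<omega> \<in> P} \<in> sets M"
    using sets_choice[of j \<iota> P] by (auto simp: Collect_conj_eq[symmetric] Int_def)
  then have "(\<lambda>\<omega>. indicator {\<omega> \<in> space M. \<iota> \<in> cell_indices \<delta> j l \<omega> \<and> Mk j \<iota> \<omega> \<in> P} \<omega> :: ennreal)
      \<in> borel_measurable M"
    by (rule borel_measurable_indicator)
  then show ?thesis
    by (rule measurable_cong[THEN iffD1, rotated]) (simp add: indicator_def)
qed

lemma borel_measurable_choice_count: "choice_count \<delta> j l P \<in> borel_measurable M"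
  unfolding choice_count_def[abs_def]
  by (rule borel_measurable_nn_integral_count_space) (auto intro: borel_measurable_marked_indicator)

lemma card_points_grid_interval:
  assumes \<delta>: "0 < \<delta>" and "a \<le> b"
  shows "card (N j \<omega> \<inter> {of_int a * \<delta> <.. of_int b * \<delta>}) = (\<Sum>l\<in>{a..<b}. cell_count \<delta> j l \<omega>)"
  using \<open>a \<le> b\<close>
proof (induction b rule: int_ge_induct)
  case (step b)
  have "of_int a * \<delta> \<le> of_int b * \<delta>" "of_int b * \<delta> \<le> (of_int b + 1) * \<delta>"
    using step.hyps \<delta> by (simp_all add: algebra_simps)
  then have "N j \<omega> \<inter> {of_int a * \<delta> <.. of_int (b+1) * \<delta>} =
        (N j \<omega> \<inter> {of_int a * \<delta> <.. of_int b * \<delta>}) \<union> (N j \<omega> \<inter> grid_cell \<delta> b)"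
    unfolding grid_cell_def by auto
  moreover have "card \<dots> = card (N j \<omega> \<inter> {of_int a * \<delta> <.. of_int b * \<delta>}) + cell_count \<delta> j b \<omega>"
    unfolding cell_count_def by (rule card_Un_disjoint) (auto intro!: locally_finite bounded_grid_cell
        simp: grid_cell_def)
  moreover have "{a..<b+1} = insert b {a..<b}"
    using step.hyps by auto
  ultimately show ?case
    using step.IH by simp
qed simp

lemma point_index_in_cell_indices_nonneg:
  assumes \<delta>: "0 < \<delta>" and l: "0 \<le> l" and s: "s \<in> N j \<omega>" "s \<in> grid_cell \<delta> l"
  shows "point_index (N j \<omega>) s \<in> cell_indices \<delta> j l \<omega>"
proof -
  have sl: "of_int l * \<delta> < s" "s \<le> (of_int l + 1) * \<delta>"
    using s unfolding grid_cell_def by auto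
  have "0 \<le> of_int l * \<delta>"
    using l \<delta> by simp
  then have "0 < s"
    using sl by linarith
  define below where "below a = N j \<omega> \<inter> {0 <.. a}" for a
  have fin: "finite (below a)" for a
    unfolding below_def by (rule locally_finite) (simp add: bounded_subset[OF bounded_cball])
  have "card (insert s (below (of_int l * \<delta>))) \<le> card (below s)"
    by (rule card_mono[OF fin]) (use s(1) \<open>0 < s\<close> sl in \<open>auto simp: below_def\<close>)
  then have lo: "card (below (of_int l * \<delta>)) < card (below s)"
    using fin sl by (simp add: below_def)
  have up: "card (below s) \<le> card (below (of_int (l+1) * \<delta>))"
    by (rule card_mono[OF fin]) (use sl in \<open>auto simp: below_def\<close>)
  have "{0..<l+1} = insert l {0..<l}"
    using l by auto
  then have "card (below (of_int (l+1) * \<delta>)) = (\<Sum>l'\<in>{0..<l}. cell_count \<delta> j l' \<omega>) + cell_count \<delta> j l \<omega>"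
    using card_points_grid_interval[OF \<delta>, of 0 "l+1" j \<omega>] l by (simp add: below_def)
  moreover have "card (below (of_int l * \<delta>)) = (\<Sum>l'\<in>{0..<l}. cell_count \<delta> j l' \<omega>)"
    using card_points_grid_interval[OF \<delta> l, of j \<omega>] by (simp add: below_def)
  moreover have "point_index (N j \<omega>) s = int (card (below s))"
    using \<open>0 < s\<close> unfolding point_index_def below_def by simp
  ultimately show ?thesis
    using lo up l unfolding cell_indices_def index_block_def by (simp del: of_nat_sum)
qed

lemma point_index_in_cell_indices_neg:
  assumes \<delta>: "0 < \<delta>" and l: "l < 0" and s: "s \<in> N j \<omega>" "s \<in> grid_cell \<delta> l"
  shows "point_index (N j \<omega>) s \<in> cell_indices \<delta> j l \<omega>"
proof -
  have sl: "of_int l * \<delta> < s" "s \<le> (of_int l + 1) * \<delta>"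
    using s unfolding grid_cell_def by auto
  have "(of_int l + 1) * \<delta> \<le> 0"
    using l \<delta> by (simp add: mult_nonpos_nonneg)
  then have "s \<le> 0"
    using sl by simp
  define above_ivl where "above_ivl a = N j \<omega> \<inter> {a <.. 0}" for a
  have fin: "finite (above_ivl a)" "finite (N j \<omega> \<inter> {s..0})" for a
    unfolding above_ivl_def by (rule locally_finite, simp add: bounded_subset[OF bounded_cball])+
  have up: "card (N j \<omega> \<inter> {s..0}) \<le> card (above_ivl (of_int l * \<delta>))"
    by (rule card_mono[OF fin(1)]) (use sl in \<open>auto simp: above_ivl_def\<close>)
  have "card (insert s (above_ivl (of_int (l+1) * \<delta>))) \<le> card (N j \<omega> \<inter> {s..0})"
    by (rule card_mono[OF fin(2)]) (use s(1) \<open>s \<le> 0\<close> sl in \<open>auto simp: above_ivl_def\<close>)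
  then have lo: "card (above_ivl (of_int (l+1) * \<delta>)) < card (N j \<omega> \<inter> {s..0})"
    using fin sl by (simp add: above_ivl_def)
  have "card (above_ivl (of_int l * \<delta>)) = (\<Sum>l'\<in>{l..<0}. cell_count \<delta> j l' \<omega>)"
    using card_points_grid_interval[OF \<delta>, of l 0 j \<omega>] l by (simp add: above_ivl_def)
  moreover have "card (above_ivl (of_int (l+1) * \<delta>)) = (\<Sum>l'\<in>{l+1..<0}. cell_count \<delta> j l' \<omega>)"
    using card_points_grid_interval[OF \<delta>, of "l+1" 0 j \<omega>] l by (simp add: above_ivl_def)
  moreover have "point_index (N j \<omega>) s = 1 - int (card (N j \<omega> \<inter> {s..0}))"
    using \<open>s \<le> 0\<close> unfolding point_index_def by simp
  ultimately show ?thesis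
    using lo up l unfolding cell_indices_def index_block_def by (simp del: of_nat_sum)
qed

lemma point_index_in_cell_indices:
  "0 < \<delta> \<Longrightarrow> s \<in> N j \<omega> \<Longrightarrow> s \<in> grid_cell \<delta> l \<Longrightarrow> point_index (N j \<omega>) s \<in> cell_indices \<delta> j l \<omega>"
  using point_index_in_cell_indices_nonneg point_index_in_cell_indices_neg by (cases "0 \<le> l") auto

lemma one_le_choice_count:
  "0 < \<delta> \<Longrightarrow> s \<in> N j \<omega> \<Longrightarrow> s \<in> grid_cell \<delta> l \<Longrightarrow> Mk j (point_index (N j \<omega>) s) \<omega> \<in> P \<Longrightarrow>
   1 \<le> choice_count \<delta> j l P \<omega>"
  unfolding choice_count_def
  by (rule order_trans[OF _ le_nn_integral_count_space[of "point_index (N j \<omega>) s"]])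
    (auto simp: point_index_in_cell_indices)

lemma nn_integral_cell_count:
  assumes \<delta>: "0 < \<delta>"
  shows "(\<integral>\<^sup>+\<omega>. of_nat (cell_count \<delta> j l \<omega>) \<partial>M) = ennreal (\<Gamma> j * \<delta>)"
proof -
  define r where "r = \<Gamma> j * \<delta>"
  have r: "0 \<le> r"
    using Gamma_pos[of j] \<delta> by (simp add: r_def)
  define S where "S k = {\<omega> \<in> space M. cell_count \<delta> j l \<omega> = k}" for k
  have S: "S k \<in> sets M" for k
    using measurable_sets[OF measurable_cell_count, of "{k}" \<delta> j l]
    by (simp add: S_def vimage_def Int_def conj_commute)
  have "measure M (S k) = r ^ k / fact k * exp (- r)" for k
    using prob_card_points[OF borel_grid_cell bounded_grid_cell] \<delta>
    by (simp add: S_def cell_count_def r_def grid_cell_def algebra_simps)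
  then have summand: "(\<integral>\<^sup>+\<omega>. of_nat k * indicator (S k) \<omega> \<partial>M) = ennreal (real k * r ^ k / fact k * exp (- r))"
    for k
    using S r by (simp add: nn_integral_cmult_indicator emeasure_eq_measure ennreal_of_nat_eq_real_of_nat
        ennreal_mult[symmetric])
  have pointwise: "of_nat (cell_count \<delta> j l \<omega>) = (\<Sum>k. of_nat k * indicator (S k) \<omega> :: ennreal)"
    if "\<omega> \<in> space M" for \<omega>
  proof -
    have "(\<lambda>k. of_nat k * indicator (S k) \<omega> :: ennreal) = (\<lambda>k. if k = cell_count \<delta> j l \<omega> then of_nat k else 0)"
      using that by (auto simp: S_def fun_eq_iff split: split_indicator)
    then show ?thesis
      using sums_unique[OF sums_single[of "cell_count \<delta> j l \<omega>" "of_nat :: nat \<Rightarrow> ennreal"]] by simp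
  qed
  have "(\<integral>\<^sup>+\<omega>. of_nat (cell_count \<delta> j l \<omega>) \<partial>M) = (\<integral>\<^sup>+\<omega>. (\<Sum>k. of_nat k * indicator (S k) \<omega>) \<partial>M)"
    by (rule nn_integral_cong) (simp add: pointwise)
  also have "\<dots> = (\<Sum>k. \<integral>\<^sup>+\<omega>. of_nat k * indicator (S k) \<omega> \<partial>M)"
    by (intro nn_integral_suminf) (use S[measurable] in measurable)
  also have "\<dots> = (\<Sum>k. ennreal (real k * r ^ k / fact k * exp (- r)))"
    by (simp only: summand)
  also have "\<dots> = ennreal (r * exp r * exp (- r))"
    using sums_mult2[OF poisson_mean_sums[of r], of "exp (-r)"] r
    by (simp add: suminf_ennreal2 sums_summable sums_unique[symmetric])
  also have "r * exp r * exp (- r) = \<Gamma> j * \<delta>"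
    by (simp add: r_def exp_minus)
  finally show ?thesis .
qed

lemma indep_grid_count_or_choice:
  assumes "0 < \<delta>"
  shows "indep_vars (\<lambda>_. count_space UNIV) count_or_choice
           (Inl ` range (\<lambda>(j, l). (j, grid_cell \<delta> l)) \<union> range Inr)"
proof (rule indep_count_or_choice)
  fix j A B
  assume "(j, A) \<in> range (\<lambda>(j, l). (j, grid_cell \<delta> l))" "(j, B) \<in> range (\<lambda>(j, l). (j, grid_cell \<delta> l))"
    and "A \<noteq> B"
  then obtain l l' where "A = grid_cell \<delta> l" "B = grid_cell \<delta> l'" "l \<noteq> l'"
    by auto
  then show "A \<inter> B = {}"
    using disjoint_grid_cells[OF assms] by simp
qed (auto simp: borel_grid_cell bounded_grid_cell)

lemma nn_integral_prod_cell_counts: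
  assumes \<delta>: "0 < \<delta>" and F: "finite F"
  shows "(\<integral>\<^sup>+\<omega>. (\<Prod>a\<in>F. of_nat (cell_count \<delta> (fst a) (snd a) \<omega>)) \<partial>M) = (\<Prod>a\<in>F. ennreal (\<Gamma> (fst a) * \<delta>))"
proof -
  define e :: "'i \<times> int \<Rightarrow> ('i \<times> real set) + ('i \<times> int)" where "e a = Inl (fst a, grid_cell \<delta> (snd a))" for a
  have inj: "inj_on e F"
    using grid_cell_inj[OF \<delta>] by (auto simp: e_def inj_on_def)
  have "e ` F \<subseteq> Inl ` range (\<lambda>(j, l). (j, grid_cell \<delta> l)) \<union> range Inr"
    by (force simp: e_def)
  then have "indep_vars (\<lambda>_. count_space UNIV) count_or_choice (e ` F)"
    by (rule indep_vars_subset[OF indep_grid_count_or_choice[OF \<delta>]])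
  then have "indep_vars (\<lambda>_. borel) (\<lambda>x \<omega>. of_nat (projl (count_or_choice x \<omega>)) :: ennreal) (e ` F)"
    by (rule indep_vars_compose2) auto
  then have "(\<integral>\<^sup>+\<omega>. (\<Prod>x\<in>e ` F. of_nat (projl (count_or_choice x \<omega>)) :: ennreal) \<partial>M)
      = (\<Prod>x\<in>e ` F. \<integral>\<^sup>+\<omega>. of_nat (projl (count_or_choice x \<omega>)) \<partial>M)"
    by (rule indep_vars_nn_integral[rotated]) (use F in auto)
  moreover have "projl (count_or_choice (e a) \<omega>) = cell_count \<delta> (fst a) (snd a) \<omega>" for a \<omega>
    by (simp add: e_def count_or_choice_def cell_count_def)
  ultimately show ?thesis
    using \<delta> by (simp add: prod.reindex[OF inj] nn_integral_cell_count)
qed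

lemma nn_integral_choice_in:
  assumes "Q = UNIV \<or> (\<exists>v. Q = {v})"
  shows "(\<integral>\<^sup>+\<omega>. of_bool (Mk j k \<omega> \<in> Q) \<partial>M) = ennreal (measure_pmf.prob (lam j) Q)"
proof -
  have "(\<integral>\<^sup>+\<omega>. of_bool (Mk j k \<omega> \<in> Q) \<partial>M) = (\<integral>\<^sup>+\<omega>. indicator {\<omega> \<in> space M. Mk j k \<omega> \<in> Q} \<omega> \<partial>M)"
    by (rule nn_integral_cong) (simp add: indicator_def)
  also have "\<dots> = emeasure M {\<omega> \<in> space M. Mk j k \<omega> \<in> Q}"
    using sets_choice by simp
  also have "\<dots> = ennreal (measure_pmf.prob (lam j) Q)"
    using assms prob_choice[of j k] by (auto simp: emeasure_eq_measure measure_pmf_single prob_space)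
  finally show ?thesis .
qed

lemma nn_integral_prod_choices_in:
  assumes B: "finite B" and Q: "\<And>b. b \<in> B \<Longrightarrow> Q b = UNIV \<or> (\<exists>v. Q b = {v})"
  shows "(\<integral>\<^sup>+\<omega>. (\<Prod>b\<in>B. of_bool (Mk (fst b) (snd b) \<omega> \<in> Q b)) \<partial>M) =
         (\<Prod>b\<in>B. ennreal (measure_pmf.prob (lam (fst b)) (Q b)))"
proof -
  have "indep_vars (\<lambda>_. count_space UNIV) count_or_choice
      (Inl ` range (\<lambda>(j, l). (j, grid_cell 1 l)) \<union> range Inr)"
    by (rule indep_grid_count_or_choice) simp
  then have "indep_vars (\<lambda>_. count_space UNIV) count_or_choice (Inr ` B)"
    by (rule indep_vars_subset) auto
  then have "indep_vars (\<lambda>_. borel) (\<lambda>x \<omega>. of_bool (projr (count_or_choice x \<omega>) \<in> Q (projr x)) :: ennreal)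
      (Inr ` B)"
    by (rule indep_vars_compose2) auto
  then have "(\<integral>\<^sup>+\<omega>. (\<Prod>x\<in>Inr ` B. of_bool (projr (count_or_choice x \<omega>) \<in> Q (projr x)) :: ennreal) \<partial>M) =
      (\<Prod>x\<in>Inr ` B. \<integral>\<^sup>+\<omega>. of_bool (projr (count_or_choice x \<omega>) \<in> Q (projr x)) \<partial>M)"
    by (rule indep_vars_nn_integral[rotated]) (use B in auto)
  moreover have "projr (count_or_choice (Inr b) \<omega>) = Mk (fst b) (snd b) \<omega>" for b \<omega>
    by (simp add: count_or_choice_def case_prod_beta)
  ultimately show ?thesis
    by (simp add: prod.reindex nn_integral_choice_in Q cong: prod.cong)
qed

lemma indep_var_counts_event_choices:
  assumes \<delta>: "0 < \<delta>" and F: "finite F"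
  shows "indep_var
    borel (\<lambda>\<omega>. of_bool (S (restrict (\<lambda>a. cell_count \<delta> (fst a) (snd a) \<omega>) F)) :: ennreal)
    borel (\<lambda>\<omega>. \<Prod>b\<in>B. of_bool (Mk (fst b) (snd b) \<omega> \<in> Q b) :: ennreal)"
proof -
  define e :: "'i \<times> int \<Rightarrow> ('i \<times> real set) + ('i \<times> int)" where "e a = Inl (fst a, grid_cell \<delta> (snd a))" for a
  define obs where "obs A \<omega> = restrict (\<lambda>x. count_or_choice x \<omega>) A" for A \<omega>
  define f1 :: "(('i \<times> real set) + ('i \<times> int) \<Rightarrow> nat + ('i \<times> real) set) \<Rightarrow> ennreal"
    where "f1 y = of_bool (S (restrict (\<lambda>a. projl (y (e a))) F))" for y
  define f2 :: "(('i \<times> real set) + ('i \<times> int) \<Rightarrow> nat + ('i \<times> real) set) \<Rightarrow> ennreal"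
    where "f2 y = (\<Prod>b\<in>B. of_bool (projr (y (Inr b)) \<in> Q b))" for y
  have "e ` F \<inter> Inr ` B = {}" "e ` F \<subseteq> Inl ` range (\<lambda>(j, l). (j, grid_cell \<delta> l)) \<union> range Inr"
    "Inr ` B \<subseteq> Inl ` range (\<lambda>(j, l). (j, grid_cell \<delta> l)) \<union> range Inr"
    by (force simp: e_def)+
  then have "indep_var (PiM (e ` F) (\<lambda>_. count_space UNIV)) (obs (e ` F))
      (PiM (Inr ` B) (\<lambda>_. count_space UNIV)) (obs (Inr ` B))"
    unfolding obs_def by (rule indep_var_restrict[OF indep_grid_count_or_choice[OF \<delta>]])
  moreover have "f1 \<in> PiM (e ` F) (\<lambda>_. count_space UNIV) \<rightarrow>\<^sub>M borel"
    unfolding f1_def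
    by (rule measurable_comp_restrict_count_space[OF F])
      (auto intro!: measurable_PiM_count_space_component[where g=projl])
  moreover have "f2 \<in> PiM (Inr ` B) (\<lambda>_. count_space UNIV) \<rightarrow>\<^sub>M borel"
    unfolding f2_def
  proof (rule borel_measurable_prod_ennreal)
    fix b
    assume "b \<in> B"
    then show "(\<lambda>y. of_bool (projr (y (Inr b)) \<in> Q b) :: ennreal) \<in> borel_measurable (PiM (Inr ` B) (\<lambda>_. count_space UNIV))"
      by (intro measurable_PiM_count_space_component[where g="\<lambda>z. of_bool (projr z \<in> Q b)"]) auto
  qed
  ultimately have "indep_var borel (f1 \<circ> obs (e ` F)) borel (f2 \<circ> obs (Inr ` B))"
    by (rule indep_var_compose)
  moreover have "f1 \<circ> obs (e ` F) = (\<lambda>\<omega>. of_bool (S (restrict (\<lambda>a. cell_count \<delta> (fst a) (snd a) \<omega>) F)))"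
  proof
    fix \<omega>
    have "restrict (\<lambda>a. projl (obs (e ` F) \<omega> (e a))) F = restrict (\<lambda>a. cell_count \<delta> (fst a) (snd a) \<omega>) F"
      by (intro restrict_ext) (auto simp: obs_def e_def count_or_choice_def cell_count_def)
    then show "(f1 \<circ> obs (e ` F)) \<omega> = of_bool (S (restrict (\<lambda>a. cell_count \<delta> (fst a) (snd a) \<omega>) F))"
      by (simp add: f1_def)
  qed
  moreover have "f2 \<circ> obs (Inr ` B) = (\<lambda>\<omega>. \<Prod>b\<in>B. of_bool (Mk (fst b) (snd b) \<omega> \<in> Q b))"
    unfolding f2_def obs_def by (auto simp: count_or_choice_def case_prod_beta intro!: prod.cong)
  ultimately show ?thesis
    by simp
qed

lemma nn_integral_counts_event_mult_choices:
  assumes \<delta>: "0 < \<delta>" and F: "finite F" and B: "finite B"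
    and Q: "\<And>b. b \<in> B \<Longrightarrow> Q b = UNIV \<or> (\<exists>v. Q b = {v})"
  shows "(\<integral>\<^sup>+\<omega>. of_bool (S (restrict (\<lambda>a. cell_count \<delta> (fst a) (snd a) \<omega>) F)) *
             (\<Prod>b\<in>B. of_bool (Mk (fst b) (snd b) \<omega> \<in> Q b)) \<partial>M) =
         (\<integral>\<^sup>+\<omega>. of_bool (S (restrict (\<lambda>a. cell_count \<delta> (fst a) (snd a) \<omega>) F)) \<partial>M) *
         (\<Prod>b\<in>B. ennreal (measure_pmf.prob (lam (fst b)) (Q b)))"
  using indep_var_nn_integral_mult[OF indep_var_counts_event_choices[OF \<delta> F]]
    nn_integral_prod_choices_in[OF B Q] by simp

lemma nn_integral_prod_marked_eq:
  assumes \<delta>: "0 < \<delta>" and I: "finite I" and inj_h: "inj_on (\<lambda>k. (j k, h k)) I"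
    and P: "\<And>k. k \<in> I \<Longrightarrow> P k = UNIV \<or> (\<exists>v. P k = {v})"
  shows "(\<integral>\<^sup>+\<omega>. (\<Prod>k\<in>I. of_bool (h k \<in> cell_indices \<delta> (j k) (l k) \<omega> \<and> Mk (j k) (h k) \<omega> \<in> P k)) \<partial>M)
     = (\<integral>\<^sup>+\<omega>. (\<Prod>k\<in>I. of_bool (h k \<in> cell_indices \<delta> (j k) (l k) \<omega>)) \<partial>M)
         * (\<Prod>k\<in>I. ennreal (measure_pmf.prob (lam (j k)) (P k)))"
proof -
  define F where "F = (\<Union>k\<in>I. (\<lambda>l'. (j k, l')) ` {min (l k) 0..max (l k) 0})"
  define S where "S y \<longleftrightarrow> (\<forall>k\<in>I. h k \<in> index_block (\<lambda>l'. y (j k, l')) (l k))" for y :: "'i \<times> int \<Rightarrow> nat"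
  define B where "B = (\<lambda>k. (j k, h k)) ` I"
  define Q where "Q b = P (inv_into I (\<lambda>k. (j k, h k)) b)" for b
  have Q: "Q b = UNIV \<or> (\<exists>v. Q b = {v})" if "b \<in> B" for b
  proof -
    from that obtain k where "k \<in> I" "b = (j k, h k)"
      by (auto simp: B_def)
    then show ?thesis
      using P[of k] by (simp add: Q_def inv_into_f_f[OF inj_h])
  qed
  have S: "S (restrict (\<lambda>a. cell_count \<delta> (fst a) (snd a) \<omega>) F) \<longleftrightarrow> (\<forall>k\<in>I. h k \<in> cell_indices \<delta> (j k) (l k) \<omega>)"
    for \<omega>
  proof -
    have "cell_indices \<delta> (j k) (l k) \<omega>
        = index_block (\<lambda>l'. restrict (\<lambda>a. cell_count \<delta> (fst a) (snd a) \<omega>) F (j k, l')) (l k)" if "k \<in> I" for k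
      unfolding cell_indices_def by (rule index_block_cong) (use that in \<open>auto simp: F_def\<close>)
    then show ?thesis
      unfolding S_def by auto
  qed
  have prod_of_bool: "(\<Prod>k\<in>I. of_bool (p k) :: ennreal) = of_bool (\<forall>k\<in>I. p k)" for p
    using I by simp
  have B: "(\<Prod>b\<in>B. g (fst b) (snd b) (Q b)) = (\<Prod>k\<in>I. g (j k) (h k) (P k))" for g :: "_ \<Rightarrow> _ \<Rightarrow> _ \<Rightarrow> ennreal"
    unfolding B_def by (subst prod.reindex[OF inj_h]) (simp add: Q_def inv_into_f_f[OF inj_h])
  have "(\<Prod>k\<in>I. of_bool (h k \<in> cell_indices \<delta> (j k) (l k) \<omega> \<and> Mk (j k) (h k) \<omega> \<in> P k))
      = of_bool (S (restrict (\<lambda>a. cell_count \<delta> (fst a) (snd a) \<omega>) F))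
        * (\<Prod>b\<in>B. of_bool (Mk (fst b) (snd b) \<omega> \<in> Q b) :: ennreal)" for \<omega>
    using I by (auto simp add: S B[of "\<lambda>j h P. of_bool (Mk j h \<omega> \<in> P)"] prod.distrib)
  then have "(\<integral>\<^sup>+\<omega>. (\<Prod>k\<in>I. of_bool (h k \<in> cell_indices \<delta> (j k) (l k) \<omega> \<and> Mk (j k) (h k) \<omega> \<in> P k)) \<partial>M)
      = (\<integral>\<^sup>+\<omega>. of_bool (S (restrict (\<lambda>a. cell_count \<delta> (fst a) (snd a) \<omega>) F))
               * (\<Prod>b\<in>B. of_bool (Mk (fst b) (snd b) \<omega> \<in> Q b)) \<partial>M)"
    by simp
  also have "\<dots> = (\<integral>\<^sup>+\<omega>. of_bool (S (restrict (\<lambda>a. cell_count \<delta> (fst a) (snd a) \<omega>) F)) \<partial>M)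
      * (\<Prod>b\<in>B. ennreal (measure_pmf.prob (lam (fst b)) (Q b)))"
    by (rule nn_integral_counts_event_mult_choices[OF \<delta> _ _ Q]) (simp_all add: F_def B_def I)
  also have "\<dots> = (\<integral>\<^sup>+\<omega>. (\<Prod>k\<in>I. of_bool (h k \<in> cell_indices \<delta> (j k) (l k) \<omega>)) \<partial>M)
      * (\<Prod>k\<in>I. ennreal (measure_pmf.prob (lam (j k)) (P k)))"
    by (simp add: S B[of "\<lambda>j h P. ennreal (measure_pmf.prob (lam j) P)"] prod_of_bool)
  finally show ?thesis .
qed

lemma not_all_in_cell_indices:
  assumes inj: "inj_on (\<lambda>k. (j k, l k)) I" and not_inj: "\<not> inj_on (\<lambda>k. (j k, h k)) I"
  shows "\<exists>k\<in>I. h k \<notin> cell_indices \<delta> (j k) (l k) \<omega>"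
proof -
  obtain k1 k2 where k: "k1 \<in> I" "k2 \<in> I" "k1 \<noteq> k2" "j k1 = j k2" "h k1 = h k2"
    using not_inj unfolding inj_on_def by auto
  then have "l k1 \<noteq> l k2"
    using inj unfolding inj_on_def by auto
  then have disj: "cell_indices \<delta> (j k1) (l k1) \<omega> \<inter> cell_indices \<delta> (j k2) (l k2) \<omega> = {}"
    unfolding cell_indices_def k(4) by (rule disjoint_index_blocks)
  show ?thesis
  proof (cases "h k1 \<in> cell_indices \<delta> (j k1) (l k1) \<omega>")
    case True
    then have "h k2 \<notin> cell_indices \<delta> (j k2) (l k2) \<omega>"
      using disj k(5) by auto
    then show ?thesis
      using k(2) by auto
  qed (use k(1) in auto)
qed

lemma nn_integral_prod_marked_le:
  assumes \<delta>: "0 < \<delta>" and I: "finite I" and inj: "inj_on (\<lambda>k. (j k, l k)) I"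
    and P: "\<And>k. k \<in> I \<Longrightarrow> P k = UNIV \<or> (\<exists>v. P k = {v})"
  shows "(\<integral>\<^sup>+\<omega>. (\<Prod>k\<in>I. of_bool (h k \<in> cell_indices \<delta> (j k) (l k) \<omega> \<and> Mk (j k) (h k) \<omega> \<in> P k)) \<partial>M)
     \<le> (\<integral>\<^sup>+\<omega>. (\<Prod>k\<in>I. of_bool (h k \<in> cell_indices \<delta> (j k) (l k) \<omega>)) \<partial>M)
         * (\<Prod>k\<in>I. ennreal (measure_pmf.prob (lam (j k)) (P k)))"
proof (cases "inj_on (\<lambda>k. (j k, h k)) I")
  case True
  then show ?thesis
    by (simp add: nn_integral_prod_marked_eq[OF \<delta> I True P])
next
  case False
  have zero: "(\<Prod>k\<in>I. of_bool (h k \<in> cell_indices \<delta> (j k) (l k) \<omega> \<and> Mk (j k) (h k) \<omega> \<in> P k)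
      :: ennreal) = 0" for \<omega>
    using not_all_in_cell_indices[OF inj False] I by (auto intro: prod_zero)
  show ?thesis
    unfolding zero by simp
qed

lemma nn_integral_cell_indices: 
  "(\<integral>\<^sup>+\<iota>. of_bool (\<iota> \<in> cell_indices \<delta> j l \<omega>) \<partial>count_space UNIV) = of_nat (cell_count \<delta> j l \<omega>)"
proof -
  have "(\<integral>\<^sup>+\<iota>. of_bool (\<iota> \<in> cell_indices \<delta> j l \<omega>) \<partial>count_space UNIV)
      = emeasure (count_space UNIV) (cell_indices \<delta> j l \<omega>)"
    by (simp add: indicator_def[symmetric])
  then show ?thesis
    by (simp add: cell_indices_def finite_index_block card_index_block)
qed

lemma nn_integral_prod_choice_count_le:
  assumes \<delta>: "0 < \<delta>" and I: "finite I" and inj: "inj_on (\<lambda>k. (j k, l k)) I"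
    and P: "\<And>k. k \<in> I \<Longrightarrow> P k = UNIV \<or> (\<exists>v. P k = {v})"
  shows "(\<integral>\<^sup>+\<omega>. (\<Prod>k\<in>I. choice_count \<delta> (j k) (l k) (P k) \<omega>) \<partial>M)
     \<le> (\<Prod>k\<in>I. ennreal (\<Gamma> (j k) * \<delta>) * ennreal (measure_pmf.prob (lam (j k)) (P k)))"
proof -
  define H where "H = PiE I (\<lambda>_. UNIV :: int set)"
  define L where "L = (\<Prod>k\<in>I. ennreal (measure_pmf.prob (lam (j k)) (P k)))"
  have H: "countable H"
    unfolding H_def by (rule countable_PiE) (auto simp: I)
  have meas: "(\<lambda>\<omega>. \<Prod>k\<in>I. of_bool (h k \<in> cell_indices \<delta> (j k) (l k) \<omega> \<and> Mk (j k) (h k) \<omega> \<in> Q k) :: ennreal)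
      \<in> borel_measurable M" for h Q
    by (intro borel_measurable_prod_ennreal borel_measurable_marked_indicator)
  have "(\<integral>\<^sup>+\<omega>. (\<Prod>k\<in>I. choice_count \<delta> (j k) (l k) (P k) \<omega>) \<partial>M) =
      (\<integral>\<^sup>+\<omega>. \<integral>\<^sup>+h. (\<Prod>k\<in>I. of_bool (h k \<in> cell_indices \<delta> (j k) (l k) \<omega> \<and> Mk (j k) (h k) \<omega> \<in> P k))
        \<partial>count_space H \<partial>M)"
    unfolding choice_count_def H_def by (simp add: prod_nn_integral_count_space[OF I])
  also have "\<dots> = (\<integral>\<^sup>+h. \<integral>\<^sup>+\<omega>. (\<Prod>k\<in>I. of_bool (h k \<in> cell_indices \<delta> (j k) (l k) \<omega> \<and> Mk (j k) (h k) \<omega> \<in> P k))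
        \<partial>M \<partial>count_space H)"
    by (rule nn_integral_count_space_nn_integral[OF H meas])
  also have "\<dots> \<le> (\<integral>\<^sup>+h. (\<integral>\<^sup>+\<omega>. (\<Prod>k\<in>I. of_bool (h k \<in> cell_indices \<delta> (j k) (l k) \<omega>)) \<partial>M) * L
        \<partial>count_space H)"
    unfolding L_def by (intro nn_integral_mono nn_integral_prod_marked_le[OF \<delta> I inj P])
  also have "\<dots> = (\<integral>\<^sup>+h. \<integral>\<^sup>+\<omega>. (\<Prod>k\<in>I. of_bool (h k \<in> cell_indices \<delta> (j k) (l k) \<omega>)) \<partial>M \<partial>count_space H) * L"
    by (rule nn_integral_multc) simp
  also have "(\<integral>\<^sup>+h. \<integral>\<^sup>+\<omega>. (\<Prod>k\<in>I. of_bool (h k \<in> cell_indices \<delta> (j k) (l k) \<omega>)) \<partial>M \<partial>count_space H)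
      = (\<integral>\<^sup>+\<omega>. \<integral>\<^sup>+h. (\<Prod>k\<in>I. of_bool (h k \<in> cell_indices \<delta> (j k) (l k) \<omega>)) \<partial>count_space H \<partial>M)"
    using nn_integral_count_space_nn_integral[OF H meas[of _ "\<lambda>_. UNIV"]] by simp
  also have "\<dots> = (\<integral>\<^sup>+\<omega>. (\<Prod>k\<in>I. of_nat (cell_count \<delta> (j k) (l k) \<omega>)) \<partial>M)"
  proof (rule nn_integral_cong)
    fix \<omega>
    show "(\<integral>\<^sup>+h. (\<Prod>k\<in>I. of_bool (h k \<in> cell_indices \<delta> (j k) (l k) \<omega>)) \<partial>count_space H)
        = (\<Prod>k\<in>I. of_nat (cell_count \<delta> (j k) (l k) \<omega>))"
      unfolding H_def
      using prod_nn_integral_count_space[OF I, of "\<lambda>k \<iota>. of_bool (\<iota> \<in> cell_indices \<delta> (j k) (l k) \<omega>)"]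
      by (simp add: nn_integral_cell_indices)
  qed
  also have "\<dots> = (\<Prod>k\<in>I. ennreal (\<Gamma> (j k) * \<delta>))"
    using nn_integral_prod_cell_counts[OF \<delta> finite_imageI[OF I], of "\<lambda>k. (j k, l k)"]
    by (simp add: prod.reindex[OF inj])
  finally show ?thesis
    by (simp add: L_def prod.distrib)
qed

lemma nn_integral_prod_list_choice_count_le:
  assumes \<delta>: "0 < \<delta>" and xs: "distinct (map fst xs)" "\<And>x. x \<in> set xs \<Longrightarrow> snd x = UNIV \<or> (\<exists>v. snd x = {v})"
  shows "(\<integral>\<^sup>+\<omega>. prod_list (map (\<lambda>((j, l), P). choice_count \<delta> j l P \<omega>) xs) \<partial>M)
     \<le> prod_list (map (\<lambda>((j, l), P). ennreal (\<Gamma> j * \<delta>) * ennreal (measure_pmf.prob (lam j) P)) xs)"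
proof -
  have "inj_on (\<lambda>k. (fst (fst (xs ! k)), snd (fst (xs ! k)))) {..<length xs}"
    using xs(1) by (simp add: inj_on_def nth_eq_iff_index_eq[symmetric])
  from nn_integral_prod_choice_count_le[OF \<delta> finite_lessThan this, of "\<lambda>k. snd (xs ! k)"] xs(2)
  show ?thesis
    by (simp add: prod_list_map_conv_prod_nth case_prod_beta)
qed

end

section \<open>Chains of ancestor cells\<close>

(* U v j is an open envelope of the j-section of the neighborhood v; envelope_mass_le is the
   hypothesis gamma < 1 with P(v) replaced by the P-mass of the envelopes of v. *)
locale envelope = poisson_choices M \<Gamma> lam N Mk
  for M :: "'w measure" and \<Gamma> :: "'i::countable \<Rightarrow> real" and lam N Mk +
  fixes U :: "('i \<times> real) set \<Rightarrow> 'i \<Rightarrow> real set"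
    and q :: real
  assumes open_envelope: "\<And>v j. open (U v j)"
    and envelope_neg: "\<And>v j. U v j \<subseteq> {..<0}"
    and section_subset_envelope: "\<And>j v j'. v \<in> set_pmf (lam j) \<Longrightarrow> {t. (j', t) \<in> v} \<subseteq> U v j'"
    and envelope_mass_le: "\<And>j. (\<integral>\<^sup>+v. ennreal (pmf (lam j) v) *
         (\<integral>\<^sup>+j'. ennreal (\<Gamma> j') * emeasure lborel (U v j') \<partial>count_space UNIV)
         \<partial>count_space (set_pmf (lam j))) \<le> ennreal q"
    and q_nonneg: "0 \<le> q" and q_less_1: "q < 1"
begin

definition ancestor_cell :: "real \<Rightarrow> int \<Rightarrow> ('i \<times> real) set \<Rightarrow> 'i \<Rightarrow> int \<Rightarrow> bool" where
  "ancestor_cell \<delta> l v j' l' \<longleftrightarrow>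
     (\<exists>s\<in>grid_cell \<delta> l. \<exists>t\<in>grid_cell \<delta> l'. cball (t - s) (2 * \<delta>) \<subseteq> U v j')"

lemma ancestor_cell_less:
  assumes \<delta>: "0 < \<delta>" and "ancestor_cell \<delta> l v j' l'"
  shows "l' < l"
proof -
  obtain s t where s: "s \<in> grid_cell \<delta> l" and t: "t \<in> grid_cell \<delta> l'" and U: "cball (t - s) (2 * \<delta>) \<subseteq> U v j'"
    using assms(2) unfolding ancestor_cell_def by blast
  have "t - s + 2 * \<delta> \<in> cball (t - s) (2 * \<delta>)"
    using \<delta> by (simp add: dist_real_def)
  then have "t - s + 2 * \<delta> < 0"
    using U envelope_neg[of v j'] by auto
  moreover have "of_int l' * \<delta> < t" "s \<le> (of_int l + 1) * \<delta>"
    using s t by (auto simp: grid_cell_def)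
  ultimately have "of_int l' * \<delta> < (of_int l - 1) * \<delta>"
    by (simp add: algebra_simps)
  then have "of_int l' < (of_int l - 1 :: real)"
    using \<delta> by (simp add: mult_less_cancel_right)
  then show "l' < l"
    by linarith
qed

lemma ancestor_cell_subset:
  assumes "ancestor_cell \<delta> l v j' l'"
  shows "grid_cell \<delta> l' \<subseteq> {x. x - of_int l * \<delta> \<in> U v j'}"
proof
  fix x
  assume x: "x \<in> grid_cell \<delta> l'"
  obtain s t where s: "s \<in> grid_cell \<delta> l" and t: "t \<in> grid_cell \<delta> l'" and U: "cball (t - s) (2 * \<delta>) \<subseteq> U v j'"
    using assms unfolding ancestor_cell_def by blast
  have "\<bar>(x - of_int l * \<delta>) - (t - s)\<bar> \<le> 2 * \<delta>"
    using x t s unfolding grid_cell_def by (auto simp: algebra_simps abs_le_iff)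
  then have "x - of_int l * \<delta> \<in> cball (t - s) (2 * \<delta>)"
    by (simp add: dist_real_def abs_minus_commute)
  then show "x \<in> {x. x - of_int l * \<delta> \<in> U v j'}"
    using U by auto
qed

lemma nn_integral_ancestor_cells_le:
  assumes "0 < \<delta>"
  shows "(\<integral>\<^sup>+l'. ennreal \<delta> \<partial>count_space {l'. ancestor_cell \<delta> l v j' l'}) \<le> emeasure lborel (U v j')"
proof -
  have U: "U v j' \<in> sets borel"
    using open_envelope by simp
  have "(\<lambda>x::real. x - of_int l * \<delta>) \<in> borel_measurable borel"
    by simp
  from measurable_sets[OF this U] have "{x. x - of_int l * \<delta> \<in> U v j'} \<in> sets borel"
    by (simp add: vimage_def)
  then have "(\<integral>\<^sup>+l'. ennreal \<delta> \<partial>count_space {l'. ancestor_cell \<delta> l v j' l'})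
      \<le> emeasure lborel {x. x - of_int l * \<delta> \<in> U v j'}"
    by (rule nn_integral_grid_cells_le[OF assms]) (use ancestor_cell_subset in auto)
  also have "\<dots> = emeasure lborel (U v j')"
    by (rule emeasure_lborel_translate[OF U])
  finally show ?thesis .
qed

(* chain_weight \<delta> n c acc counts the chains of n further ancestor cells starting from the cell c,
   each point weighted by the choice counts; acc lists the cells already visited, each with the
   constraint (UNIV or the chosen neighborhood) on the choices of its points. *)
primrec chain_weight ::
  "real \<Rightarrow> nat \<Rightarrow> 'i \<times> int \<Rightarrow> (('i \<times> int) \<times> ('i \<times> real) set set) list \<Rightarrow> 'w \<Rightarrow> ennreal" where
  "chain_weight \<delta> 0 c acc \<omega> = prod_list (map (\<lambda>((j, l), P). choice_count \<delta> j l P \<omega>) (acc @ [(c, UNIV)]))"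
| "chain_weight \<delta> (Suc n) c acc \<omega> =
    (\<integral>\<^sup>+v. \<integral>\<^sup>+j'. \<integral>\<^sup>+l'. chain_weight \<delta> n (j', l') (acc @ [(c, {v})]) \<omega>
        \<partial>count_space {l'. ancestor_cell \<delta> (snd c) v j' l'} \<partial>count_space UNIV \<partial>count_space (set_pmf (lam (fst c))))"

lemma borel_measurable_chain_weight: "chain_weight \<delta> n c acc \<in> borel_measurable M"
proof (induction n arbitrary: c acc)
  case 0
  have "(\<lambda>\<omega>. chain_weight \<delta> 0 c acc \<omega>) \<in> borel_measurable M"
    unfolding chain_weight.simps prod_list_map_conv_prod_nth
    by (intro borel_measurable_prod_ennreal) (simp add: case_prod_beta borel_measurable_choice_count)
  then show ?case
    by simp
next
  case (Suc n)
  have "(\<lambda>\<omega>. chain_weight \<delta> (Suc n) c acc \<omega>) \<in> borel_measurable M"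
    unfolding chain_weight.simps
    by (intro borel_measurable_nn_integral_count_space) (auto intro: Suc)
  then show ?case
    by simp
qed

definition visited_bound :: "real \<Rightarrow> (('i \<times> int) \<times> ('i \<times> real) set set) list \<Rightarrow> ennreal" where
  "visited_bound \<delta> acc =
     prod_list (map (\<lambda>((j, l), P). ennreal (\<Gamma> j * \<delta>) * ennreal (measure_pmf.prob (lam j) P)) acc)"

lemma nn_integral_chain_weight_Suc:
  "(\<integral>\<^sup>+\<omega>. chain_weight \<delta> (Suc n) (j, l) acc \<omega> \<partial>M) =
     (\<integral>\<^sup>+v. \<integral>\<^sup>+j'. \<integral>\<^sup>+l'. \<integral>\<^sup>+\<omega>. chain_weight \<delta> n (j', l') (acc @ [((j, l), {v})]) \<omega> \<partial>M
        \<partial>count_space {l'. ancestor_cell \<delta> l v j' l'} \<partial>count_space UNIV \<partial>count_space (set_pmf (lam j)))"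
proof -
  note meas = borel_measurable_chain_weight[unfolded fun_eq_iff[symmetric]]
  have "(\<integral>\<^sup>+\<omega>. chain_weight \<delta> (Suc n) (j, l) acc \<omega> \<partial>M) =
     (\<integral>\<^sup>+v. \<integral>\<^sup>+\<omega>. \<integral>\<^sup>+j'. \<integral>\<^sup>+l'. chain_weight \<delta> n (j', l') (acc @ [((j, l), {v})]) \<omega>
        \<partial>count_space {l'. ancestor_cell \<delta> l v j' l'} \<partial>count_space UNIV \<partial>M \<partial>count_space (set_pmf (lam j)))"
    unfolding chain_weight.simps fst_conv snd_conv
    by (rule nn_integral_count_space_nn_integral)
      (auto intro!: borel_measurable_nn_integral_count_space meas)
  also have "\<dots> = (\<integral>\<^sup>+v. \<integral>\<^sup>+j'. \<integral>\<^sup>+\<omega>. \<integral>\<^sup>+l'. chain_weight \<delta> n (j', l') (acc @ [((j, l), {v})]) \<omega>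
        \<partial>count_space {l'. ancestor_cell \<delta> l v j' l'} \<partial>M \<partial>count_space UNIV \<partial>count_space (set_pmf (lam j)))"
    by (intro nn_integral_cong nn_integral_count_space_nn_integral)
      (auto intro!: borel_measurable_nn_integral_count_space meas)
  also have "\<dots> = (\<integral>\<^sup>+v. \<integral>\<^sup>+j'. \<integral>\<^sup>+l'. \<integral>\<^sup>+\<omega>. chain_weight \<delta> n (j', l') (acc @ [((j, l), {v})]) \<omega> \<partial>M
        \<partial>count_space {l'. ancestor_cell \<delta> l v j' l'} \<partial>count_space UNIV \<partial>count_space (set_pmf (lam j)))"
    by (intro nn_integral_cong nn_integral_count_space_nn_integral) (auto intro: meas)
  finally show ?thesis .
qed

lemma nn_integral_chain_weight_Suc_le:
  assumes \<delta>: "0 < \<delta>"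
    and step: "\<And>v j' l'. ancestor_cell \<delta> l v j' l' \<Longrightarrow>
      (\<integral>\<^sup>+\<omega>. chain_weight \<delta> n (j', l') (acc @ [((j, l), {v})]) \<omega> \<partial>M)
        \<le> K * ennreal (pmf (lam j) v) * ennreal (\<Gamma> j') * ennreal \<delta>"
  shows "(\<integral>\<^sup>+\<omega>. chain_weight \<delta> (Suc n) (j, l) acc \<omega> \<partial>M) \<le> K * ennreal q"
proof -
  have ancestor_step: "K * ennreal (pmf (lam j) v) * ennreal (\<Gamma> j')
        * (\<integral>\<^sup>+l'. ennreal \<delta> \<partial>count_space {l'. ancestor_cell \<delta> l v j' l'})
      \<le> K * ennreal (pmf (lam j) v) * (ennreal (\<Gamma> j') * emeasure lborel (U v j'))" for v j'
    using mult_left_mono[OF nn_integral_ancestor_cells_le[OF \<delta>, of l v j'],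
        of "K * ennreal (pmf (lam j) v) * ennreal (\<Gamma> j')"]
    by (simp add: ac_simps)
  have "(\<integral>\<^sup>+\<omega>. chain_weight \<delta> (Suc n) (j, l) acc \<omega> \<partial>M)
      \<le> (\<integral>\<^sup>+v. \<integral>\<^sup>+j'. \<integral>\<^sup>+l'. K * ennreal (pmf (lam j) v) * ennreal (\<Gamma> j') * ennreal \<delta>
           \<partial>count_space {l'. ancestor_cell \<delta> l v j' l'} \<partial>count_space UNIV \<partial>count_space (set_pmf (lam j)))"
    unfolding nn_integral_chain_weight_Suc by (intro nn_integral_mono) (simp add: step)
  also have "\<dots> = (\<integral>\<^sup>+v. \<integral>\<^sup>+j'. K * ennreal (pmf (lam j) v) * ennreal (\<Gamma> j')
           * (\<integral>\<^sup>+l'. ennreal \<delta> \<partial>count_space {l'. ancestor_cell \<delta> l v j' l'})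
         \<partial>count_space UNIV \<partial>count_space (set_pmf (lam j)))"
    by (simp add: nn_integral_cmult mult.assoc)
  also have "\<dots> \<le> (\<integral>\<^sup>+v. \<integral>\<^sup>+j'. K * ennreal (pmf (lam j) v) * (ennreal (\<Gamma> j') * emeasure lborel (U v j'))
         \<partial>count_space UNIV \<partial>count_space (set_pmf (lam j)))"
    by (intro nn_integral_mono) (rule ancestor_step)
  also have "\<dots> = K * (\<integral>\<^sup>+v. ennreal (pmf (lam j) v) * (\<integral>\<^sup>+j'. ennreal (\<Gamma> j') * emeasure lborel (U v j')
         \<partial>count_space UNIV) \<partial>count_space (set_pmf (lam j)))"
    by (simp add: nn_integral_cmult mult.assoc)
  also have "\<dots> \<le> K * ennreal q"
    by (rule mult_left_mono[OF envelope_mass_le]) simp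
  finally show ?thesis .
qed

lemma nn_integral_chain_weight_le:
  assumes \<delta>: "0 < \<delta>"
  shows "distinct (map fst acc) \<Longrightarrow> (\<forall>x\<in>set acc. snd c < snd (fst x)) \<Longrightarrow>
     (\<forall>x\<in>set acc. snd x = UNIV \<or> (\<exists>v. snd x = {v})) \<Longrightarrow>
     (\<integral>\<^sup>+\<omega>. chain_weight \<delta> n c acc \<omega> \<partial>M) \<le> visited_bound \<delta> acc * ennreal (\<Gamma> (fst c) * \<delta>) * ennreal q ^ n"
proof (induction n arbitrary: c acc)
  case 0
  have "c \<notin> fst ` set acc"
    using "0.prems"(2) by auto
  then have "(\<integral>\<^sup>+\<omega>. chain_weight \<delta> 0 c acc \<omega> \<partial>M) \<le> visited_bound \<delta> (acc @ [(c, UNIV)])"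
    unfolding chain_weight.simps visited_bound_def
    by (intro nn_integral_prod_list_choice_count_le[OF \<delta>]) (use "0.prems" in auto)
  then show ?case
    by (simp add: visited_bound_def case_prod_beta)
next
  case (Suc n)
  obtain j l where c: "c = (j, l)"
    by (cases c)
  define K where "K = visited_bound \<delta> acc * ennreal (\<Gamma> j * \<delta>) * ennreal q ^ n"
  have IH: "(\<integral>\<^sup>+\<omega>. chain_weight \<delta> n (j', l') (acc @ [((j, l), {v})]) \<omega> \<partial>M)
      \<le> K * ennreal (pmf (lam j) v) * ennreal (\<Gamma> j') * ennreal \<delta>"
    if "ancestor_cell \<delta> l v j' l'" for v j' l'
  proof -
    have "l' < l"
      using ancestor_cell_less[OF \<delta> that] .
    then have "distinct (map fst (acc @ [((j, l), {v})]))"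
      "\<forall>x\<in>set (acc @ [((j, l), {v})]). snd (j', l') < snd (fst x)"
      "\<forall>x\<in>set (acc @ [((j, l), {v})]). snd x = UNIV \<or> (\<exists>v. snd x = {v})"
      using Suc.prems c by force+
    then have "(\<integral>\<^sup>+\<omega>. chain_weight \<delta> n (j', l') (acc @ [((j, l), {v})]) \<omega> \<partial>M)
        \<le> visited_bound \<delta> (acc @ [((j, l), {v})]) * ennreal (\<Gamma> (fst (j', l')) * \<delta>) * ennreal q ^ n"
      by (rule Suc.IH)
    also have "\<dots> = K * ennreal (pmf (lam j) v) * ennreal (\<Gamma> j') * ennreal \<delta>"
      using Gamma_pos[of j'] \<delta>
      by (simp add: visited_bound_def K_def measure_pmf_single ennreal_mult' ac_simps)
    finally show ?thesis .
  qed
  have "(\<integral>\<^sup>+\<omega>. chain_weight \<delta> (Suc n) (j, l) acc \<omega> \<partial>M) \<le> K * ennreal q"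
    using nn_integral_chain_weight_Suc_le[OF \<delta> IH] .
  then show ?case
    by (simp add: K_def c ac_simps)
qed

definition chain_weight_total :: "real \<Rightarrow> nat \<Rightarrow> 'i \<Rightarrow> real \<Rightarrow> 'w \<Rightarrow> ennreal" where
  "chain_weight_total \<delta> n i K \<omega> =
     (\<integral>\<^sup>+l. chain_weight \<delta> n (i, l) [] \<omega> \<partial>count_space {l. grid_cell \<delta> l \<inter> {-K..K} \<noteq> {}})"

lemma borel_measurable_chain_weight_total: "chain_weight_total \<delta> n i K \<in> borel_measurable M"
  unfolding chain_weight_total_def[abs_def]
  by (rule borel_measurable_nn_integral_count_space)
    (auto intro: borel_measurable_chain_weight[unfolded fun_eq_iff[symmetric]])

lemma nn_integral_chain_weight_total_le:
  assumes \<delta>: "0 < \<delta>" "\<delta> \<le> 1" and K: "0 \<le> K"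
  shows "(\<integral>\<^sup>+\<omega>. chain_weight_total \<delta> n i K \<omega> \<partial>M) \<le> ennreal (\<Gamma> i * (2 * K + 2) * q ^ n)"
proof -
  define R where "R = {l. grid_cell \<delta> l \<inter> {-K..K} \<noteq> {}}"
  have "(\<integral>\<^sup>+\<omega>. chain_weight_total \<delta> n i K \<omega> \<partial>M) = (\<integral>\<^sup>+l. \<integral>\<^sup>+\<omega>. chain_weight \<delta> n (i, l) [] \<omega> \<partial>M \<partial>count_space R)"
    unfolding chain_weight_total_def R_def
    by (rule nn_integral_count_space_nn_integral)
      (auto intro: borel_measurable_chain_weight[unfolded fun_eq_iff[symmetric]])
  also have "\<dots> \<le> (\<integral>\<^sup>+l. ennreal (\<Gamma> i) * ennreal q ^ n * ennreal \<delta> \<partial>count_space R)"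
    using nn_integral_chain_weight_le[OF \<delta>(1), of "[]" "(i, _)" n] Gamma_pos[of i] \<delta>
    by (intro nn_integral_mono) (simp add: visited_bound_def ennreal_mult' ac_simps)
  also have "\<dots> = ennreal (\<Gamma> i) * ennreal q ^ n * (\<integral>\<^sup>+l. ennreal \<delta> \<partial>count_space R)"
    by (simp add: nn_integral_cmult mult.assoc)
  also have "\<dots> \<le> ennreal (\<Gamma> i) * ennreal q ^ n * emeasure lborel {-K-1..K+1}"
  proof (intro mult_left_mono nn_integral_grid_cells_le[OF \<delta>(1)])
    fix l
    assume "l \<in> R"
    then obtain y where y: "y \<in> grid_cell \<delta> l" "-K \<le> y" "y \<le> K"
      unfolding R_def by auto
    show "grid_cell \<delta> l \<subseteq> {-K-1..K+1}"
    proof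
      fix x
      assume "x \<in> grid_cell \<delta> l"
      then have "\<bar>x - y\<bar> \<le> \<delta>"
        using y(1) unfolding grid_cell_def by (auto simp: algebra_simps abs_le_iff)
      then show "x \<in> {-K-1..K+1}"
        using y \<delta> by auto
    qed
  qed auto
  also have "\<dots> = ennreal (\<Gamma> i * (2 * K + 2) * q ^ n)"
    using K Gamma_pos[of i] q_nonneg by (simp add: ennreal_mult' ennreal_power ac_simps)
  finally show ?thesis .
qed

definition robust_chain :: "real \<Rightarrow> 'w \<Rightarrow> nat \<Rightarrow> (nat \<Rightarrow> 'i \<times> real) \<Rightarrow> bool" where
  "robust_chain \<delta> \<omega> n p \<longleftrightarrow> (\<forall>k<n. cball (snd (p (Suc k)) - snd (p k)) (2 * \<delta>) \<subseteq>
       U (Mk (fst (p k)) (point_index (N (fst (p k)) \<omega>) (snd (p k))) \<omega>) (fst (p (Suc k))))"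

lemma eventually_robust_chain:
  assumes supp: "\<forall>j k. Mk j k \<omega> \<in> set_pmf (lam j)"
    and path: "\<forall>k<n. p (Suc k) \<in> first_ancestors N Mk \<omega> (p k)"
  shows "\<forall>\<^sub>F \<delta> in at_right 0. robust_chain \<delta> \<omega> n p"
proof -
  have "\<forall>\<^sub>F \<delta> in at_right 0. cball (snd (p (Suc k)) - snd (p k)) (2 * \<delta>) \<subseteq>
       U (Mk (fst (p k)) (point_index (N (fst (p k)) \<omega>) (snd (p k))) \<omega>) (fst (p (Suc k)))"
    if "k < n" for k
  proof -
    obtain j s j' t where p: "p k = (j, s)" "p (Suc k) = (j', t)"
      by (metis surj_pair)
    define v where "v = Mk j (point_index (N j \<omega>) s) \<omega>"
    have "(j', t - s) \<in> v"
      using path that p by (auto simp: first_ancestors_def v_def)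
    then have "t - s \<in> U v j'"
      using section_subset_envelope[of v j j'] supp by (auto simp: v_def)
    then obtain e where "0 < e" "cball (t - s) e \<subseteq> U v j'"
      using open_envelope open_contains_cball by blast
    then have "\<forall>\<^sub>F \<delta> in at_right 0. cball (t - s) (2 * \<delta>) \<subseteq> U v j'"
      unfolding eventually_at_right_field
      by (intro exI[of _ "e / 2"]) (auto intro: order_trans[OF subset_cball])
    then show ?thesis
      by (simp add: p v_def)
  qed
  then have "\<forall>\<^sub>F \<delta> in at_right 0. \<forall>k\<in>{..<n}. cball (snd (p (Suc k)) - snd (p k)) (2 * \<delta>) \<subseteq>
       U (Mk (fst (p k)) (point_index (N (fst (p k)) \<omega>) (snd (p k))) \<omega>) (fst (p (Suc k)))"
    by (intro eventually_ball_finite) auto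
  then show ?thesis
    unfolding robust_chain_def lessThan_iff[symmetric] Ball_def by simp
qed

lemma chain_weight_Suc_ge:
  assumes "v \<in> set_pmf (lam j)" "ancestor_cell \<delta> l v j' l'"
  shows "chain_weight \<delta> n (j', l') (acc @ [((j, l), {v})]) \<omega> \<le> chain_weight \<delta> (Suc n) (j, l) acc \<omega>"
proof -
  have "chain_weight \<delta> n (j', l') (acc @ [((j, l), {v})]) \<omega>
      \<le> (\<integral>\<^sup>+l''. chain_weight \<delta> n (j', l'') (acc @ [((j, l), {v})]) \<omega>
           \<partial>count_space {l''. ancestor_cell \<delta> l v j' l''})"
    by (rule le_nn_integral_count_space) (simp add: assms(2))
  also have "\<dots> \<le> (\<integral>\<^sup>+j''. \<integral>\<^sup>+l''. chain_weight \<delta> n (j'', l'') (acc @ [((j, l), {v})]) \<omega>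
           \<partial>count_space {l''. ancestor_cell \<delta> l v j'' l''} \<partial>count_space UNIV)"
    by (rule le_nn_integral_count_space[where f="\<lambda>j''. \<integral>\<^sup>+l''. chain_weight \<delta> n (j'', l'')
        (acc @ [((j, l), {v})]) \<omega> \<partial>count_space {l''. ancestor_cell \<delta> l v j'' l''}"]) simp
  also have "\<dots> \<le> chain_weight \<delta> (Suc n) (j, l) acc \<omega>"
    unfolding chain_weight.simps fst_conv snd_conv
    by (rule le_nn_integral_count_space[where f="\<lambda>v. \<integral>\<^sup>+j''. \<integral>\<^sup>+l''. chain_weight \<delta> n (j'', l'')
        (acc @ [((j, l), {v})]) \<omega> \<partial>count_space {l''. ancestor_cell \<delta> l v j'' l''} \<partial>count_space UNIV"])
      (rule assms(1))
  finally show ?thesis .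
qed

lemma one_le_chain_weight:
  assumes \<delta>: "0 < \<delta>" and supp: "\<forall>j k. Mk j k \<omega> \<in> set_pmf (lam j)"
  shows "p 0 = (j, s) \<Longrightarrow> s \<in> N j \<omega> \<Longrightarrow> s \<in> grid_cell \<delta> l \<Longrightarrow>
    \<forall>k<n. p (Suc k) \<in> first_ancestors N Mk \<omega> (p k) \<Longrightarrow> robust_chain \<delta> \<omega> n p \<Longrightarrow>
    \<forall>((j, l), P)\<in>set acc. 1 \<le> choice_count \<delta> j l P \<omega> \<Longrightarrow>
    1 \<le> chain_weight \<delta> n (j, l) acc \<omega>"
proof (induction n arbitrary: p j s l acc)
  case 0
  have "1 \<le> choice_count \<delta> j l UNIV \<omega>"
    by (rule one_le_choice_count[OF \<delta> "0.prems"(2,3)]) simp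
  with "0.prems"(6) have "\<forall>((j, l), P)\<in>set (acc @ [((j, l), UNIV)]). 1 \<le> choice_count \<delta> j l P \<omega>"
    by auto
  then show ?case
    unfolding chain_weight.simps by (intro one_le_prod_list) (auto split: prod.splits)
next
  case (Suc n)
  define v where "v = Mk j (point_index (N j \<omega>) s) \<omega>"
  obtain j' t where p1: "p (Suc 0) = (j', t)"
    by (cases "p (Suc 0)")
  have "p (Suc 0) \<in> first_ancestors N Mk \<omega> (p 0)"
    using Suc.prems(4) by auto
  then have t: "t \<in> N j' \<omega>" "(j', t - s) \<in> v"
    using p1 Suc.prems(1) by (auto simp: first_ancestors_def v_def)
  define l' where "l' = \<lceil>t / \<delta>\<rceil> - 1"
  have tl': "t \<in> grid_cell \<delta> l'"
    unfolding l'_def by (rule mem_grid_cell_ceiling[OF \<delta>])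
  have "cball (t - s) (2 * \<delta>) \<subseteq> U v j'"
    using Suc.prems(5) p1 Suc.prems(1) unfolding robust_chain_def v_def by (metis fst_conv snd_conv zero_less_Suc)
  then have ancestor: "ancestor_cell \<delta> l v j' l'"
    unfolding ancestor_cell_def using Suc.prems(3) tl' by blast
  have "1 \<le> choice_count \<delta> j l {v} \<omega>"
    by (rule one_le_choice_count[OF \<delta> Suc.prems(2,3)]) (simp add: v_def)
  then have "1 \<le> chain_weight \<delta> n (j', l') (acc @ [((j, l), {v})]) \<omega>"
    using Suc.prems(4-6) p1 t(1) tl'
    by (intro Suc.IH[of "\<lambda>k. p (Suc k)" j' t]) (auto simp: robust_chain_def)
  also have "\<dots> \<le> chain_weight \<delta> (Suc n) (j, l) acc \<omega>"
    using supp by (intro chain_weight_Suc_ge ancestor) (simp add: v_def)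
  finally show ?case .
qed

definition chain_limit :: "nat \<Rightarrow> 'i \<Rightarrow> nat \<Rightarrow> 'w \<Rightarrow> ennreal" where
  "chain_limit n i K \<omega> = liminf (\<lambda>r. chain_weight_total (inverse (real (Suc r))) n i (real K) \<omega>)"

lemma borel_measurable_chain_limit: "chain_limit n i K \<in> borel_measurable M"
  unfolding chain_limit_def[abs_def]
  by (intro borel_measurable_liminf borel_measurable_chain_weight_total)

lemma nn_integral_chain_limit_le:
  "(\<integral>\<^sup>+\<omega>. chain_limit n i K \<omega> \<partial>M) \<le> ennreal (\<Gamma> i * (2 * real K + 2) * q ^ n)"
  unfolding chain_limit_def
proof (rule order_trans[OF nn_integral_liminf[OF borel_measurable_chain_weight_total]])
  have "inverse (real (Suc r)) \<le> 1" for r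
    by (simp add: field_simps)
  then show "liminf (\<lambda>r. \<integral>\<^sup>+\<omega>. chain_weight_total (inverse (real (Suc r))) n i (real K) \<omega> \<partial>M)
      \<le> ennreal (\<Gamma> i * (2 * real K + 2) * q ^ n)"
    by (intro Liminf_le always_eventually allI nn_integral_chain_weight_total_le) auto
qed

lemma one_le_chain_limit:
  assumes supp: "\<forall>j k. Mk j k \<omega> \<in> set_pmf (lam j)" and T: "T \<in> N i \<omega>" "\<bar>T\<bar> \<le> real K"
    and inf: "\<not> backward_steps (first_ancestors N Mk \<omega>) (i, T) < \<infinity>"
  shows "1 \<le> chain_limit n i K \<omega>"
proof -
  obtain p where p: "p 0 = (i, T)" "\<forall>k<n. p (Suc k) \<in> first_ancestors N Mk \<omega> (p k)"
    using path_if_backward_steps_infinite[OF inf] by blast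
  have "filterlim (\<lambda>r. inverse (real (Suc r))) (at_right 0) sequentially"
    by (rule tendsto_imp_filterlim_at_right[OF LIMSEQ_inverse_real_of_nat]) simp
  with eventually_robust_chain[OF supp p(2)]
  have "\<forall>\<^sub>F r in sequentially. robust_chain (inverse (real (Suc r))) \<omega> n p"
    by (rule eventually_compose_filterlim)
  then have "\<forall>\<^sub>F r in sequentially. 1 \<le> chain_weight_total (inverse (real (Suc r))) n i (real K) \<omega>"
  proof eventually_elim
    case (elim r)
    define \<delta> where "\<delta> = inverse (real (Suc r))"
    define l where "l = \<lceil>T / \<delta>\<rceil> - 1"
    have \<delta>: "0 < \<delta>"
      by (simp add: \<delta>_def)
    have Tl: "T \<in> grid_cell \<delta> l"
      unfolding l_def by (rule mem_grid_cell_ceiling[OF \<delta>])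
    have "1 \<le> chain_weight \<delta> n (i, l) [] \<omega>"
      using elim by (intro one_le_chain_weight[OF \<delta> supp p(1) T(1) Tl p(2)]) (simp_all add: \<delta>_def)
    also have "\<dots> \<le> chain_weight_total \<delta> n i (real K) \<omega>"
      unfolding chain_weight_total_def
      by (rule le_nn_integral_count_space) (use Tl T(2) in \<open>auto simp: abs_le_iff\<close>)
    finally show ?case
      by (simp add: \<delta>_def)
  qed
  then show ?thesis
    unfolding chain_limit_def by (rule Liminf_bounded)
qed

lemma null_sets_chain_limit: "{\<omega> \<in> space M. \<forall>n. 1 \<le> chain_limit n i K \<omega>} \<in> null_sets M"
proof -
  define A where "A = {\<omega> \<in> space M. \<forall>n. 1 \<le> chain_limit n i K \<omega>}"
  have A: "A \<in> sets M"
    unfolding A_def using borel_measurable_chain_limit[measurable] by measurable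
  have "emeasure M A \<le> ennreal (\<Gamma> i * (2 * real K + 2) * q ^ n)" for n
  proof -
    have "emeasure M A = (\<integral>\<^sup>+\<omega>. indicator A \<omega> \<partial>M)"
      using A by simp
    also have "\<dots> \<le> (\<integral>\<^sup>+\<omega>. chain_limit n i K \<omega> \<partial>M)"
      by (rule nn_integral_mono) (auto simp: A_def split: split_indicator)
    also have "\<dots> \<le> ennreal (\<Gamma> i * (2 * real K + 2) * q ^ n)"
      by (rule nn_integral_chain_limit_le)
    finally show ?thesis .
  qed
  moreover have "(\<lambda>n. ennreal (\<Gamma> i * (2 * real K + 2) * q ^ n)) \<longlonglongrightarrow> ennreal 0"
    using q_nonneg q_less_1 by (intro tendsto_ennrealI tendsto_mult_right_zero LIMSEQ_power_zero) simp
  ultimately have "emeasure M A \<le> ennreal 0"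
    by (intro LIMSEQ_le_const) auto
  then show ?thesis
    using A by (simp add: A_def null_sets_def)
qed

theorem AE_backward_steps_finite:
  "AE \<omega> in M. \<forall>i. \<forall>T \<in> N i \<omega>. backward_steps (first_ancestors N Mk \<omega>) (i, T) < \<infinity>"
proof -
  define Z where "Z i K = {\<omega> \<in> space M. \<forall>n. 1 \<le> chain_limit n i K \<omega>}" for i K
  have Z: "Z i K \<in> null_sets M" for i K
    unfolding Z_def by (rule null_sets_chain_limit)
  have "AE \<omega> in M. \<forall>i K. \<omega> \<notin> Z i K"
    by (simp add: AE_all_countable AE_not_in Z)
  then show ?thesis
    using AE_choice_in_support AE_space
  proof eventually_elim
    case (elim \<omega>)
    show ?case
    proof (intro allI ballI)
      fix i T
      assume T: "T \<in> N i \<omega>"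
      show "backward_steps (first_ancestors N Mk \<omega>) (i, T) < \<infinity>"
      proof (rule ccontr)
        assume inf: "\<not> backward_steps (first_ancestors N Mk \<omega>) (i, T) < \<infinity>"
        have "\<bar>T\<bar> \<le> real (nat \<lceil>\<bar>T\<bar>\<rceil>)"
          by linarith
        with elim(2) T inf have "\<forall>n. 1 \<le> chain_limit n i (nat \<lceil>\<bar>T\<bar>\<rceil>) \<omega>"
          using one_le_chain_limit by blast
        then show False
          using elim(1,3) by (auto simp: Z_def)
      qed
    qed
  qed
qed

end

section \<open>Construction of the envelopes\<close>

lemma nn_integral_envelope_le_Pmeas:
  fixes \<Gamma> :: "'i::countable \<Rightarrow> real"
  assumes \<Gamma>: "\<And>j. 0 < \<Gamma> j" and \<epsilon>: "0 \<le> \<epsilon>"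
    and U: "\<And>j. emeasure lborel (U j)
      \<le> emeasure lborel {t. (j, t) \<in> v} + ennreal (\<epsilon> / (\<Gamma> j * 2 ^ Suc (to_nat j)))"
  shows "(\<integral>\<^sup>+j. ennreal (\<Gamma> j) * emeasure lborel (U j) \<partial>count_space UNIV) \<le> Pmeas \<Gamma> v + ennreal \<epsilon>"
proof -
  have "ennreal (\<Gamma> j) * emeasure lborel (U j)
      \<le> ennreal (\<Gamma> j) * emeasure lborel {t. (j, t) \<in> v} + ennreal (\<epsilon> / 2 ^ Suc (to_nat j))" for j
  proof -
    have "ennreal (\<Gamma> j) * emeasure lborel (U j)
        \<le> ennreal (\<Gamma> j) * (emeasure lborel {t. (j, t) \<in> v} + ennreal (\<epsilon> / (\<Gamma> j * 2 ^ Suc (to_nat j))))"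
      using U by (intro mult_left_mono) auto
    also have "\<dots> = ennreal (\<Gamma> j) * emeasure lborel {t. (j, t) \<in> v} + ennreal (\<epsilon> / 2 ^ Suc (to_nat j))"
      using \<Gamma>[of j] \<epsilon> by (simp add: distrib_left ennreal_mult'[symmetric])
    finally show ?thesis .
  qed
  then have "(\<integral>\<^sup>+j. ennreal (\<Gamma> j) * emeasure lborel (U j) \<partial>count_space UNIV)
      \<le> (\<integral>\<^sup>+j. ennreal (\<Gamma> j) * emeasure lborel {t. (j, t) \<in> v} \<partial>count_space UNIV) +
         (\<integral>\<^sup>+j. ennreal (\<epsilon> / 2 ^ Suc (to_nat (j::'i))) \<partial>count_space UNIV)"
    by (subst nn_integral_add[symmetric]) (auto intro: nn_integral_mono)
  also have "\<dots> \<le> Pmeas \<Gamma> v + ennreal \<epsilon>"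
    unfolding Pmeas_def using \<epsilon>
    by (intro add_mono nn_integral_count_space_le_infsum nn_integral_geometric_to_nat_le) auto
  finally show ?thesis .
qed

lemma open_envelopes_exist:
  fixes \<Gamma> :: "'i::countable \<Rightarrow> real"
  assumes \<Gamma>: "\<And>j. 0 < \<Gamma> j" and \<epsilon>: "0 < \<epsilon>"
  obtains U :: "('i \<times> real) set \<Rightarrow> 'i \<Rightarrow> real set" where
    "\<And>v j. open (U v j)" "\<And>v j. U v j \<subseteq> {..<0}"
    "\<And>v j. neighborhood v \<Longrightarrow> {t. (j, t) \<in> v} \<subseteq> U v j"
    "\<And>v. neighborhood v \<Longrightarrow>
       (\<integral>\<^sup>+j. ennreal (\<Gamma> j) * emeasure lborel (U v j) \<partial>count_space UNIV) \<le> Pmeas \<Gamma> v + ennreal \<epsilon>"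
proof -
  define e where "e j = \<epsilon> / (\<Gamma> j * 2 ^ Suc (to_nat j))" for j :: 'i
  have e: "0 < e j" for j
    using \<epsilon> \<Gamma>[of j] by (simp add: e_def)
  have "\<exists>T. open T \<and> T \<subseteq> {..<0} \<and> (neighborhood v \<longrightarrow> {t. (j, t) \<in> v} \<subseteq> T \<and>
      emeasure lborel T \<le> emeasure lborel {t. (j, t) \<in> v} + ennreal (e j))" for v j
  proof (cases "neighborhood v")
    case True
    then have "{t. (j, t) \<in> v} \<in> sets borel" "{t. (j, t) \<in> v} \<subseteq> {..<0}"
      unfolding neighborhood_def by auto
    from open_envelope_exists[OF this e] show ?thesis
      by metis
  qed (intro exI[of _ "{}"], simp)
  then obtain U where U: "\<And>v j. open (U v j) \<and> U v j \<subseteq> {..<0} \<and> (neighborhood v \<longrightarrow> {t. (j, t) \<in> v} \<subseteq> U v j \<and>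
      emeasure lborel (U v j) \<le> emeasure lborel {t. (j, t) \<in> v} + ennreal (e j))"
    by metis
  have mass: "(\<integral>\<^sup>+j. ennreal (\<Gamma> j) * emeasure lborel (U v j) \<partial>count_space UNIV) \<le> Pmeas \<Gamma> v + ennreal \<epsilon>"
    if "neighborhood v" for v
    by (rule nn_integral_envelope_le_Pmeas[of \<Gamma>, OF \<Gamma>]) (use U that \<epsilon> in \<open>auto simp: e_def\<close>)
  show ?thesis
    by (rule that[of U]) (use U mass in auto)
qed

lemma nn_integral_pmf_le_infsum_add:
  fixes F G :: "'a \<Rightarrow> ennreal"
  assumes V: "set_pmf p \<subseteq> V" and FG: "\<And>v. v \<in> set_pmf p \<Longrightarrow> F v \<le> G v + ennreal \<epsilon>"
  shows "(\<integral>\<^sup>+v. ennreal (pmf p v) * F v \<partial>count_space (set_pmf p))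
    \<le> (\<Sum>\<^sub>\<infinity>v\<in>V. G v * ennreal (pmf p v)) + ennreal \<epsilon>"
proof -
  have "(\<integral>\<^sup>+v. ennreal (pmf p v) * F v \<partial>count_space (set_pmf p))
      \<le> (\<integral>\<^sup>+v. G v * ennreal (pmf p v) + ennreal \<epsilon> * ennreal (pmf p v) \<partial>count_space (set_pmf p))"
  proof (rule nn_integral_mono)
    fix v
    assume "v \<in> space (count_space (set_pmf p))"
    then have "ennreal (pmf p v) * F v \<le> ennreal (pmf p v) * (G v + ennreal \<epsilon>)"
      using FG by (intro mult_left_mono) auto
    then show "ennreal (pmf p v) * F v \<le> G v * ennreal (pmf p v) + ennreal \<epsilon> * ennreal (pmf p v)"
      by (simp add: distrib_left mult.commute)
  qed
  also have "\<dots> = (\<integral>\<^sup>+v. G v * ennreal (pmf p v) \<partial>count_space (set_pmf p)) +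
      ennreal \<epsilon> * (\<integral>\<^sup>+v. ennreal (pmf p v) \<partial>count_space (set_pmf p))"
    by (simp add: nn_integral_add nn_integral_cmult)
  also have "(\<integral>\<^sup>+v. ennreal (pmf p v) \<partial>count_space (set_pmf p)) = 1"
    by (simp add: nn_integral_pmf emeasure_pmf)
  also have "(\<integral>\<^sup>+v. G v * ennreal (pmf p v) \<partial>count_space (set_pmf p)) \<le> (\<Sum>\<^sub>\<infinity>v\<in>V. G v * ennreal (pmf p v))"
    by (rule nn_integral_count_space_le_infsum[OF countable_set_pmf V])
  finally show ?thesis
    by (simp add: add_right_mono)
qed

lemma envelope_exists:
  fixes \<Gamma> :: "'i::countable \<Rightarrow> real"
  assumes Gamma_pos: "\<And>j. 0 < \<Gamma> j" and setting: "poisson_with_choices M \<Gamma> lam N Mk"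
    and nbhd: "\<And>j v. v \<in> set_pmf (lam j) \<Longrightarrow> neighborhood v"
    and lam_on_V: "\<And>j. set_pmf (lam j) \<subseteq> V j"
    and gamma_lt_1: "(SUP i. (\<Sum>\<^sub>\<infinity> v\<in>V i. Pmeas \<Gamma> v * ennreal (pmf (lam i) v))) < 1"
  obtains U q where "envelope M \<Gamma> lam N Mk U q"
proof -
  define \<gamma> where "\<gamma> = (SUP i. (\<Sum>\<^sub>\<infinity> v\<in>V i. Pmeas \<Gamma> v * ennreal (pmf (lam i) v)))"
  obtain g where g: "\<gamma> = ennreal g" "0 \<le> g" "g < 1"
    using gamma_lt_1 unfolding \<gamma>_def[symmetric]
    by (metis ennreal_cases ennreal_less_one_iff ennreal_one_less_top less_imp_le not_less_iff_gr_or_eq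
        order.strict_trans)
  define \<epsilon> where "\<epsilon> = (1 - g) / 2"
  have \<epsilon>: "0 < \<epsilon>"
    using g by (simp add: \<epsilon>_def)
  obtain U where U: "\<And>v j. open (U v j)" "\<And>v j. U v j \<subseteq> {..<0}"
    "\<And>v j. neighborhood v \<Longrightarrow> {t. (j, t) \<in> v} \<subseteq> U v j"
    "\<And>v. neighborhood v \<Longrightarrow>
       (\<integral>\<^sup>+j. ennreal (\<Gamma> j) * emeasure lborel (U v j) \<partial>count_space UNIV) \<le> Pmeas \<Gamma> v + ennreal \<epsilon>"
    by (rule open_envelopes_exist[of \<Gamma>, OF Gamma_pos \<epsilon>]) blast
  have mass: "(\<integral>\<^sup>+v. ennreal (pmf (lam j) v) * (\<integral>\<^sup>+j'. ennreal (\<Gamma> j') * emeasure lborel (U v j')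
      \<partial>count_space UNIV) \<partial>count_space (set_pmf (lam j))) \<le> ennreal (g + \<epsilon>)" for j
  proof -
    have "(\<integral>\<^sup>+v. ennreal (pmf (lam j) v) * (\<integral>\<^sup>+j'. ennreal (\<Gamma> j') * emeasure lborel (U v j')
        \<partial>count_space UNIV) \<partial>count_space (set_pmf (lam j)))
        \<le> (\<Sum>\<^sub>\<infinity>v\<in>V j. Pmeas \<Gamma> v * ennreal (pmf (lam j) v)) + ennreal \<epsilon>"
      by (rule nn_integral_pmf_le_infsum_add[OF lam_on_V]) (rule U(4)[OF nbhd])
    also have "\<dots> \<le> \<gamma> + ennreal \<epsilon>"
      unfolding \<gamma>_def by (intro add_right_mono SUP_upper) simp
    also have "\<dots> = ennreal (g + \<epsilon>)"
      using g \<epsilon> by (simp add: ennreal_plus)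
    finally show ?thesis .
  qed
  have "g + \<epsilon> < 1"
    using g(3) unfolding \<epsilon>_def by (simp add: field_simps)
  then have "envelope M \<Gamma> lam N Mk U (g + \<epsilon>)"
  proof (intro envelope.intro envelope_axioms.intro poisson_choices.intro poisson_choices_axioms.intro)
    show "prob_space M"
      using setting unfolding poisson_with_choices_def by (rule conjunct1)
  qed (use Gamma_pos setting U(1-3) nbhd mass g(2) \<epsilon> in auto)
  then show ?thesis
    by (rule that)
qed

theorem mainTheorem6:
  fixes M :: "'w measure"
    and \<Gamma> :: "'i::countable \<Rightarrow> real"
    and V :: "'i \<Rightarrow> ('i \<times> real) set set"
    and lam :: "'i \<Rightarrow> ('i \<times> real) set pmf"
    and N :: "'i \<Rightarrow> 'w \<Rightarrow> real set"
    and Mk :: "'i \<Rightarrow> int \<Rightarrow> 'w \<Rightarrow> ('i \<times> real) set"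
  assumes Gamma_pos: "\<And>j. 0 < \<Gamma> j"
    and V_countable: "\<And>j. countable (V j)"
    and V_finite_nbhd: "\<And>j v. v \<in> V j \<Longrightarrow> finite_neighborhood v"
    and lam_on_V: "\<And>j. set_pmf (lam j) \<subseteq> V j"
    and setting: "poisson_with_choices M \<Gamma> lam N Mk"
    and gamma_lt_1: "(SUP i. (\<Sum>\<^sub>\<infinity> v\<in>V i. Pmeas \<Gamma> v * ennreal (pmf (lam i) v))) < 1"
  shows "AE \<omega> in M. \<forall>i. \<forall>T \<in> N i \<omega>. backward_steps (first_ancestors N Mk \<omega>) (i, T) < \<infinity>"
proof -
  have "neighborhood v" if "v \<in> set_pmf (lam j)" for j v
    using V_finite_nbhd lam_on_V that unfolding finite_neighborhood_def by blast
  then obtain U q where "envelope M \<Gamma> lam N Mk U q"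
    by (rule envelope_exists[OF Gamma_pos setting _ lam_on_V gamma_lt_1]) blast
  then interpret envelope M \<Gamma> lam N Mk U q .
  show ?thesis
    by (rule AE_backward_steps_finite)
qed

end
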